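(* Let $n\in\mathbb{N}$ and $\lambda\in\mathbb{R}^n$. Then \[\sum_{P\in\mathcal{P}_{ord}(\lambda)}(-1)^{|P|}\varepsilon(P)\varepsilon'(P)=(-1)^n\sum_{p\in\mathcal{P}^0_{\le2}(n)}\varepsilon(p)c(p,\lambda).\]
   Context: Partitions of $\{1,\dots,n\}$ are unordered sets $p=\{I_\alpha\}_{\alpha\in A}$ of nonempty disjoint subsets with union $\{1,\dots,n\}$; ordered partitions are sequences $P=(I_1,\dots,I_k)$ of such; $|P|=k$; each ordered partition has an underlying partition. $s_J(\lambda)=\sum_{i\in J}\lambda_i$; $\mathcal{P}_{ord}(\lambda)$ is the set of ordered partitions with $s_{I_1}(\lambda)+\dots+s_{I_i}(\lambda)>0$ for all $i$. For $P=(I_1,\dots,I_k)$ with $n_i=|I_i|$, $\sigma_P\in\mathfrak{S}_n$ is the unique permutation such that for each $i\in\{0,\dots,k-1\}$, $\sigma_P^{-1}$ maps $\{n_1+\dots+n_i+1,\dots,n_1+\dots+n_{i+1}\}$ increasingly onto $I_{i+1}$, and $\varepsilon(P)=\mathrm{sgn}(\sigma_P)$. For a partition $p=\{I_\alpha\}$, $\varepsilon'(p)=(-1)^{\frac12\sum_\alpha|I_\alpha|(|I_\alpha|-1)}$, and $\varepsilon'(P)$ is $\varepsilon'$ of the underlying partition. $\mathcal{P}^0(n)$ is the set of partitions having at most one block of odd cardinality; for $p\in\mathcal{P}^0(n)$, $\varepsilon(P)$ is the same for all orderings $P$ of $p$ and is denoted $\varepsilon(p)$. $\mathcal{P}^0_{\le2}(n)$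 is the set of $p\in\mathcal{P}^0(n)$ all of whose blocks have cardinality $\le2$. Define $c_1(a)=1$ if $a>0$, $0$ otherwise; $c_2(a,b)=0$ if $a+b\le0$ or $a\le0$, $=1$ if $a>0$ and $b>0$, $=2$ otherwise. For $p\in\mathcal{P}^0_{\le 2}(n)$, $c(p,\lambda)=\prod_\alpha c_{I_\alpha}(\lambda)$, where $c_{\{i\}}(\lambda)=c_1(\lambda_i)$ and $c_{\{i_1,i_2\}}(\lambda)=c_2(\lambda_{i_1},\lambda_{i_2})$ for $i_1<i_2$. *)

theory Defs
  imports Complex_Main "HOL-Combinatorics.Permutations"
begin

definition s_blk :: "nat set \<Rightarrow> (nat \<Rightarrow> real) \<Rightarrow> real" where
  "s_blk J lam = (\<Sum>i\<in>J. lam i)"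

definition is_partition :: "nat \<Rightarrow> nat set set \<Rightarrow> bool" where
  "is_partition n p \<longleftrightarrow> (\<forall>I\<in>p. I \<noteq> {}) \<and> (\<forall>I\<in>p. \<forall>J\<in>p. I \<noteq> J \<longrightarrow> I \<inter> J = {})
     \<and> \<Union>p = {1..n}"

definition is_ord_partition :: "nat \<Rightarrow> nat set list \<Rightarrow> bool" where
  "is_ord_partition n P \<longleftrightarrow> (\<forall>I\<in>set P. I \<noteq> {})
     \<and> (\<forall>i<length P. \<forall>j<length P. i \<noteq> j \<longrightarrow> P ! i \<inter> P ! j = {})
     \<and> \<Union>(set P) = {1..n}"

definition P_ord :: "nat \<Rightarrow> (nat \<Rightarrow> real) \<Rightarrow> nat set list set" where
  "P_ord n lam = {P. is_ord_partition n P \<and>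
     (\<forall>i. 1 \<le> i \<and> i \<le> length P \<longrightarrow> (\<Sum>J\<leftarrow>take i P. s_blk J lam) > 0)}"

(* sigma_P^{-1}: maps n_1+..+n_i+1 .. n_1+..+n_{i+1} increasingly onto I_{i+1};
   identity outside {1..n} *)
definition sigma_inv :: "nat \<Rightarrow> nat set list \<Rightarrow> nat \<Rightarrow> nat" where
  "sigma_inv n P = (\<lambda>j. if 1 \<le> j \<and> j \<le> n
        then concat (map sorted_list_of_set P) ! (j - 1) else j)"

definition sigma_P :: "nat \<Rightarrow> nat set list \<Rightarrow> nat \<Rightarrow> nat" where
  "sigma_P n P = inv (sigma_inv n P)"

definition eps_ord :: "nat \<Rightarrow> nat set list \<Rightarrow> int" where
  "eps_ord n P = sign (sigma_P n P)"

definition eps' :: "nat set set \<Rightarrow> int" where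
  "eps' p = (-1) ^ (\<Sum>I\<in>p. card I * (card I - 1) div 2)"

definition P0 :: "nat \<Rightarrow> nat set set set" where
  "P0 n = {p. is_partition n p \<and> card {I\<in>p. odd (card I)} \<le> 1}"

definition P0_le2 :: "nat \<Rightarrow> nat set set set" where
  "P0_le2 n = {p \<in> P0 n. \<forall>I\<in>p. card I \<le> 2}"

definition eps_part :: "nat \<Rightarrow> nat set set \<Rightarrow> int" where
  "eps_part n p = eps_ord n (SOME P. distinct P \<and> set P = p)"

definition c1 :: "real \<Rightarrow> int" where
  "c1 a = (if a > 0 then 1 else 0)"

definition c2 :: "real \<Rightarrow> real \<Rightarrow> int" where
  "c2 a b = (if a + b \<le> 0 \<or> a \<le> 0 then 0 else if a > 0 \<and> b > 0 then 1 else 2)"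

definition c_blk :: "nat set \<Rightarrow> (nat \<Rightarrow> real) \<Rightarrow> int" where
  "c_blk I lam = (if card I = 1 then c1 (lam (the_elem I))
                  else c2 (lam (Min I)) (lam (Max I)))"

definition c_part :: "nat set set \<Rightarrow> (nat \<Rightarrow> real) \<Rightarrow> int" where
  "c_part p lam = (\<Prod>I\<in>p. c_blk I lam)"

end

theory Submission
  imports Defs
begin

(* Read a set function f :: 'a set => int as the element sum_S f(S) e_S of an exterior algebra,
   where e_S is the product of the generators e_i, i in S, in increasing order. Then wedge is the
   exterior product, pfaffian c is exp (sum_{y<x} c y x e_y e_x), affine l is 1 + sum_a l a e_a,
   and rev_sign = wedge (pfaffian (-1)) (affine 1).

   Consider both sides as set functions of S, the right-hand side multiplied by (-1)^|S|, which
   gives signed_c_sum = wedge (pfaffian c2) (affine (-c1)). Both are 1 at the empty set, vanish at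
   nonempty S with s_S(lam) <= 0, and vanish at S with s_S(lam) > 0 after right multiplication by
   rev_sign. For ordered partitions this is the recursion obtained by splitting off the last
   block. For signed_c_sum, exp a wedge exp b = exp (a + b) for 2-forms a, b, and
   affine (-q) wedge affine 1 = exp (sum_{y<x} (q x - q y) e_y e_x) wedge affine (1 - q) turn the
   product into wedge (pfaffian d) (affine (1 - c1)), whose coefficients vanish pointwise. Since
   rev_sign {} = 1, these properties determine the set function. Finally
   wedge (pfaffian c2) (affine c1) expands into the sum over partitions into pairs and at most one
   singleton. *)

section \<open>Signs of shuffles\<close>

definition inversions_between :: "'a::linorder set \<Rightarrow> 'a set \<Rightarrow> nat" where
  "inversions_between A B = card {(a, b). a \<in> A \<and> b \<in> B \<and> b < a}"

definition shuffle_sign :: "'a::linorder set \<Rightarrow> 'a set \<Rightarrow> int" where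
  "shuffle_sign A B = (-1) ^ inversions_between A B"

lemma finite_inversion_pairs:
  "finite A \<Longrightarrow> finite B \<Longrightarrow> finite {(a, b). a \<in> A \<and> b \<in> B \<and> b < a}"
  by (rule finite_subset[of _ "A \<times> B"]) auto

lemma inversions_between_Un_left:
  assumes "finite A" "finite B" "finite C" "A \<inter> B = {}"
  shows "inversions_between (A \<union> B) C = inversions_between A C + inversions_between B C"
proof -
  have "{(a, c). a \<in> A \<union> B \<and> c \<in> C \<and> c < a}
      = {(a, c). a \<in> A \<and> c \<in> C \<and> c < a} \<union> {(a, c). a \<in> B \<and> c \<in> C \<and> c < a}"
    by auto
  then show ?thesis
    unfolding inversions_between_def
    by (simp only:) (rule card_Un_disjoint, use assms in \<open>auto intro: finite_inversion_pairs\<close>)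
qed

lemma inversions_between_Un_right:
  assumes "finite A" "finite B" "finite C" "B \<inter> C = {}"
  shows "inversions_between A (B \<union> C) = inversions_between A B + inversions_between A C"
proof -
  have "{(a, b). a \<in> A \<and> b \<in> B \<union> C \<and> b < a}
      = {(a, b). a \<in> A \<and> b \<in> B \<and> b < a} \<union> {(a, b). a \<in> A \<and> b \<in> C \<and> b < a}"
    by auto
  then show ?thesis
    unfolding inversions_between_def
    by (simp only:) (rule card_Un_disjoint, use assms in \<open>auto intro: finite_inversion_pairs\<close>)
qed

lemma inversions_between_singleton_left: "inversions_between {x} B = card {b \<in> B. b < x}"
proof -
  have "{(a, b). a \<in> {x} \<and> b \<in> B \<and> b < a} = Pair x ` {b \<in> B. b < x}" by auto
  moreover have "inj_on (Pair x) {b \<in> B. b < x}" by (auto simp: inj_on_def)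
  ultimately show ?thesis unfolding inversions_between_def by (simp add: card_image)
qed

lemma inversions_between_singleton_right: "inversions_between A {x} = card {a \<in> A. x < a}"
proof -
  have "{(a, b). a \<in> A \<and> b \<in> {x} \<and> b < a} = (\<lambda>a. (a, x)) ` {a \<in> A. x < a}" by auto
  moreover have "inj_on (\<lambda>a. (a, x)) {a \<in> A. x < a}" by (auto simp: inj_on_def)
  ultimately show ?thesis unfolding inversions_between_def by (simp add: card_image)
qed

lemma inversions_between_swap:
  assumes "finite A" "finite B" "A \<inter> B = {}"
  shows "inversions_between A B + inversions_between B A = card A * card B"
proof -
  let ?X = "{(a, b). a \<in> A \<and> b \<in> B \<and> b < a}" and ?Y = "{(a, b). a \<in> A \<and> b \<in> B \<and> a < b}"
  have "?Y = prod.swap ` {(b, a). b \<in> B \<and> a \<in> A \<and> a < b}" by auto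
  then have Y: "card ?Y = inversions_between B A"
    unfolding inversions_between_def by (simp add: card_image)
  have "A \<times> B = ?X \<union> ?Y" using assms(3) by (auto simp: linorder_neq_iff)
  then have "card A * card B = card (?X \<union> ?Y)" by (metis card_cartesian_product)
  also have "\<dots> = card ?X + card ?Y"
    by (rule card_Un_disjoint) (use assms in \<open>auto intro: finite_subset[of _ "A \<times> B"]\<close>)
  finally show ?thesis using Y unfolding inversions_between_def by simp
qed

lemma shuffle_sign_Un_left:
  "finite A \<Longrightarrow> finite B \<Longrightarrow> finite C \<Longrightarrow> A \<inter> B = {}
    \<Longrightarrow> shuffle_sign (A \<union> B) C = shuffle_sign A C * shuffle_sign B C"
  by (simp add: shuffle_sign_def inversions_between_Un_left power_add)

lemma shuffle_sign_Un_right: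
  "finite A \<Longrightarrow> finite B \<Longrightarrow> finite C \<Longrightarrow> B \<inter> C = {}
    \<Longrightarrow> shuffle_sign A (B \<union> C) = shuffle_sign A B * shuffle_sign A C"
  by (simp add: shuffle_sign_def inversions_between_Un_right power_add)

lemma shuffle_sign_singleton_left: "shuffle_sign {x} B = (-1) ^ card {b \<in> B. b < x}"
  by (simp add: shuffle_sign_def inversions_between_singleton_left)

lemma shuffle_sign_singleton_right: "shuffle_sign A {x} = (-1) ^ card {a \<in> A. x < a}"
  by (simp add: shuffle_sign_def inversions_between_singleton_right)

lemma shuffle_sign_empty [simp]: "shuffle_sign {} B = 1" "shuffle_sign A {} = 1"
  by (simp_all add: shuffle_sign_def inversions_between_def)

lemma shuffle_sign_square [simp]: "shuffle_sign A B * shuffle_sign A B = 1"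
  by (simp add: shuffle_sign_def flip: power_add)

lemma shuffle_sign_insert_self_right [simp]: "shuffle_sign (insert y A) {y} = shuffle_sign A {y}"
proof -
  have "{a \<in> insert y A. y < a} = {a \<in> A. y < a}" by auto
  then show ?thesis by (simp only: shuffle_sign_singleton_right)
qed

lemma shuffle_sign_Diff_self_right [simp]: "shuffle_sign (A - {y}) {y} = shuffle_sign A {y}"
proof -
  have "{a \<in> A - {y}. y < a} = {a \<in> A. y < a}" by auto
  then show ?thesis by (simp only: shuffle_sign_singleton_right)
qed

lemma shuffle_sign_commute:
  assumes "finite A" "finite B" "A \<inter> B = {}" "even (card A * card B)"
  shows "shuffle_sign B A = shuffle_sign A B"
proof -
  have "shuffle_sign A B * shuffle_sign B A = 1"
    using inversions_between_swap[OF assms(1-3)] assms(4)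
    by (simp add: shuffle_sign_def flip: power_add)
  then have "shuffle_sign A B * (shuffle_sign A B * shuffle_sign B A) = shuffle_sign A B" by simp
  then show ?thesis by (simp flip: mult.assoc)
qed

lemma shuffle_sign_singleton_flip:
  assumes "finite B" "y \<notin> B"
  shows "(-1) ^ card B * shuffle_sign {y} B = shuffle_sign B {y}"
proof -
  have swap: "shuffle_sign {y} B * shuffle_sign B {y} = (-1) ^ card B"
    using inversions_between_swap[of "{y}" B] assms by (simp add: shuffle_sign_def flip: power_add)
  have "shuffle_sign B {y} = shuffle_sign {y} B * shuffle_sign {y} B * shuffle_sign B {y}" by simp
  also have "\<dots> = shuffle_sign {y} B * (-1) ^ card B" by (simp only: mult.assoc swap)
  finally show ?thesis by (simp add: ac_simps)
qed

lemma shuffle_sign_insert_max_left: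
  assumes "finite A" "finite B" "x \<notin> A" "\<forall>b\<in>B. b < x"
  shows "shuffle_sign (insert x A) B = (-1) ^ card B * shuffle_sign A B"
proof -
  have "{b \<in> B. b < x} = B" using assms(4) by auto
  then have "shuffle_sign {x} B = (-1) ^ card B" by (simp only: shuffle_sign_singleton_left)
  with shuffle_sign_Un_left[of "{x}" A B] assms show ?thesis by simp
qed

lemma shuffle_sign_insert_max_right:
  assumes "finite A" "finite B" "x \<notin> B" "\<forall>a\<in>A. a < x"
  shows "shuffle_sign A (insert x B) = shuffle_sign A B"
proof -
  have "{a \<in> A. x < a} = {}" using assms(4) by force
  then have "shuffle_sign A {x} = 1" by (simp only: shuffle_sign_singleton_right) simp
  with shuffle_sign_Un_right[of A "{x}" B] assms show ?thesis by simp
qed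

lemma shuffle_sign_pair_max:
  assumes "finite U" "\<forall>u\<in>U. u < x" "y \<in> U"
  shows "shuffle_sign {y, x} (U - {y}) = shuffle_sign U {y}"
proof -
  have "shuffle_sign {y, x} (U - {y}) = shuffle_sign (insert x {y}) (U - {y})" by (simp add: insert_commute)
  also have "\<dots> = (-1) ^ card (U - {y}) * shuffle_sign {y} (U - {y})"
    using assms by (intro shuffle_sign_insert_max_left) auto
  also have "\<dots> = shuffle_sign U {y}" using assms shuffle_sign_singleton_flip[of "U - {y}" y] by simp
  finally show ?thesis .
qed

lemma shuffle_sign_remove_point_right:
  assumes "finite U" "y \<in> U" "T \<subseteq> U - {y}"
  shows "shuffle_sign T (U - T) * shuffle_sign (U - T) {y} = shuffle_sign U {y} * shuffle_sign T (U - {y} - T)"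
proof -
  have fin: "finite T" "finite (U - T)" "finite (U - {y} - T)" using assms by (auto intro: finite_subset)
  have "shuffle_sign T (U - T) = shuffle_sign T {y} * shuffle_sign T (U - {y} - T)"
    using fin assms by (subst shuffle_sign_Un_right[symmetric]) (auto intro: arg_cong[where f = "shuffle_sign T"])
  moreover have "shuffle_sign U {y} = shuffle_sign T {y} * shuffle_sign (U - T) {y}"
    using fin assms by (subst shuffle_sign_Un_left[symmetric]) (auto intro: arg_cong[where f = "\<lambda>A. shuffle_sign A {y}"])
  ultimately show ?thesis by (simp add: algebra_simps)
qed

lemma shuffle_sign_remove_point_left:
  assumes "finite U" "y \<in> U" "T \<subseteq> U - {y}"
  shows "(-1) ^ card (U - {y} - T) * shuffle_sign (insert y T) (U - {y} - T) * shuffle_sign T {y}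
    = shuffle_sign U {y} * shuffle_sign T (U - {y} - T)"
proof -
  define V where "V = U - {y} - T"
  have fin: "finite T" "finite V" "y \<notin> V" "y \<notin> T" "V \<inter> T = {}"
    using assms by (auto simp: V_def intro: finite_subset)
  have "shuffle_sign (insert y T) V = shuffle_sign {y} V * shuffle_sign T V"
    using fin by (subst shuffle_sign_Un_left[symmetric]) auto
  moreover have "U = insert y (V \<union> T)" using assms by (auto simp: V_def)
  then have "shuffle_sign U {y} = shuffle_sign V {y} * shuffle_sign T {y}"
    using fin by (simp add: shuffle_sign_Un_left)
  moreover have "(-1) ^ card V * shuffle_sign {y} V = shuffle_sign V {y}"
    using fin by (intro shuffle_sign_singleton_flip)
  ultimately show ?thesis unfolding V_def[symmetric] by (simp add: algebra_simps)
qed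

lemma shuffle_sign_cocycle:
  assumes "finite A" "finite B" "finite C" "A \<inter> B = {}" "A \<inter> C = {}" "B \<inter> C = {}"
  shows "shuffle_sign A B * shuffle_sign (A \<union> B) C = shuffle_sign A (B \<union> C) * shuffle_sign B C"
  using assms by (simp add: shuffle_sign_Un_left shuffle_sign_Un_right)

lemma sum_shuffle_sign_singleton:
  "finite U \<Longrightarrow> (\<Sum>y\<in>U. shuffle_sign U {y}) = (if odd (card U) then 1 else 0)"
proof (induction U rule: finite_linorder_max_induct)
  case (insert b A)
  have b: "b \<notin> A" using insert by auto
  have "shuffle_sign (insert b A) {y} = - shuffle_sign A {y}" if "y \<in> A" for y
  proof -
    have "{z \<in> insert b A. y < z} = insert b {z \<in> A. y < z}" using insert that by auto
    then show ?thesis using insert b by (simp add: shuffle_sign_singleton_right)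
  qed
  moreover have "shuffle_sign A {b} = 1"
  proof -
    have "{a \<in> A. b < a} = {}" using insert by force
    then show ?thesis by (simp only: shuffle_sign_singleton_right) simp
  qed
  ultimately have "(\<Sum>y\<in>insert b A. shuffle_sign (insert b A) {y}) = 1 - (\<Sum>y\<in>A. shuffle_sign A {y})"
    using insert b by (simp add: sum_negf)
  then show ?case using insert b by simp
qed simp

lemma sum_shuffle_sign_pair:
  assumes "a < b"
  shows "(\<Sum>y\<in>{a, b}. shuffle_sign {a, b} {y} * G y) = G b - G a"
proof -
  have "{z \<in> {a, b}. a < z} = {b}" "{z \<in> {a, b}. b < z} = {}" using assms by auto
  then have "shuffle_sign {a, b} {a} = -1" "shuffle_sign {a, b} {b} = 1"
    by (simp_all only: shuffle_sign_singleton_right) simp_all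
  then show ?thesis using assms by simp
qed

lemma sum_shuffle_sign_triple:
  assumes "a < b" "b < c"
  shows "(\<Sum>y\<in>{a, b, c}. shuffle_sign {a, b, c} {y} * G y) = G a - G b + G c"
proof -
  have "{z \<in> {a, b, c}. a < z} = {b, c}" "{z \<in> {a, b, c}. b < z} = {c}" "{z \<in> {a, b, c}. c < z} = {}"
    using assms by auto
  then have "shuffle_sign {a, b, c} {a} = 1" "shuffle_sign {a, b, c} {b} = -1" "shuffle_sign {a, b, c} {c} = 1"
    using assms by (simp_all only: shuffle_sign_singleton_right) simp_all
  then show ?thesis using assms by (simp add: order.strict_implies_not_eq)
qed

section \<open>The wedge product of set functions\<close>

lemma sum_Pow_Pow:
  assumes "finite S"
  shows "(\<Sum>T\<in>Pow S. \<Sum>A\<in>Pow T. F A T) = (\<Sum>A\<in>Pow S. \<Sum>B\<in>Pow (S - A). F A (A \<union> B))"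
proof -
  have "(\<Sum>T\<in>Pow S. \<Sum>A\<in>Pow T. F A T) = (\<Sum>T\<in>Pow S. \<Sum>A\<in>{A \<in> Pow S. A \<subseteq> T}. F A T)"
    by (intro sum.cong) auto
  also have "\<dots> = (\<Sum>A\<in>Pow S. \<Sum>T\<in>{T \<in> Pow S. A \<subseteq> T}. F A T)"
    by (rule sum.swap_restrict) (use assms in auto)
  also have "\<dots> = (\<Sum>A\<in>Pow S. \<Sum>B\<in>Pow (S - A). F A (A \<union> B))"
  proof (rule sum.cong[OF refl])
    fix A assume "A \<in> Pow S"
    then have "{T \<in> Pow S. A \<subseteq> T} = (\<union>) A ` Pow (S - A)"
    proof (intro equalityI subsetI)
      fix T assume "T \<in> {T \<in> Pow S. A \<subseteq> T}"
      then have "T = A \<union> (T - A)" "T - A \<in> Pow (S - A)" by auto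
      then show "T \<in> (\<union>) A ` Pow (S - A)" by (rule image_eqI)
    qed auto
    moreover have "inj_on ((\<union>) A) (Pow (S - A))" by (auto simp: inj_on_def)
    ultimately show "(\<Sum>T\<in>{T \<in> Pow S. A \<subseteq> T}. F A T) = (\<Sum>B\<in>Pow (S - A). F A (A \<union> B))"
      by (simp add: sum.reindex)
  qed
  finally show ?thesis .
qed

lemma sum_Pow_notin_swap:
  assumes "finite U"
  shows "(\<Sum>T\<in>Pow U. \<Sum>y\<in>U - T. G T y) = (\<Sum>y\<in>U. \<Sum>T\<in>Pow (U - {y}). G T y)"
proof -
  have "(\<Sum>T\<in>Pow U. \<Sum>y\<in>U - T. G T y) = (\<Sum>T\<in>Pow U. \<Sum>y\<in>{y \<in> U. y \<notin> T}. G T y)"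
    by (rule sum.cong[OF refl], rule sum.cong) auto
  also have "\<dots> = (\<Sum>y\<in>U. \<Sum>T\<in>{T \<in> Pow U. y \<notin> T}. G T y)"
    by (rule sum.swap_restrict) (use assms in auto)
  also have "\<dots> = (\<Sum>y\<in>U. \<Sum>T\<in>Pow (U - {y}). G T y)"
    by (rule sum.cong[OF refl], rule sum.cong) auto
  finally show ?thesis .
qed

lemma sum_Pow_mem_swap:
  assumes "finite U"
  shows "(\<Sum>T\<in>Pow U. \<Sum>y\<in>T. G T y) = (\<Sum>y\<in>U. \<Sum>T\<in>Pow (U - {y}). G (insert y T) y)"
proof -
  have "(\<Sum>T\<in>Pow U. \<Sum>y\<in>T. G T y) = (\<Sum>T\<in>Pow U. \<Sum>y\<in>{y \<in> U. y \<in> T}. G T y)"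
    by (rule sum.cong[OF refl], rule sum.cong) auto
  also have "\<dots> = (\<Sum>y\<in>U. \<Sum>T\<in>{T \<in> Pow U. y \<in> T}. G T y)"
    by (rule sum.swap_restrict) (use assms in auto)
  also have "\<dots> = (\<Sum>y\<in>U. \<Sum>T\<in>Pow (U - {y}). G (insert y T) y)"
  proof (rule sum.cong[OF refl])
    fix y assume "y \<in> U"
    then have "{T \<in> Pow U. y \<in> T} = insert y ` Pow (U - {y})"
    proof (intro equalityI subsetI)
      fix T assume "T \<in> {T \<in> Pow U. y \<in> T}"
      then have "T = insert y (T - {y})" "T - {y} \<in> Pow (U - {y})" by auto
      then show "T \<in> insert y ` Pow (U - {y})" by (rule image_eqI)
    qed auto
    moreover have "inj_on (insert y) (Pow (U - {y}))" by (rule inj_onI) blast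
    ultimately show "(\<Sum>T\<in>{T \<in> Pow U. y \<in> T}. G T y) = (\<Sum>T\<in>Pow (U - {y}). G (insert y T) y)"
      by (simp add: sum.reindex)
  qed
  finally show ?thesis .
qed

definition wedge :: "('a::linorder set \<Rightarrow> int) \<Rightarrow> ('a set \<Rightarrow> int) \<Rightarrow> 'a set \<Rightarrow> int" where
  "wedge f g S = (\<Sum>T\<in>Pow S. shuffle_sign T (S - T) * f T * g (S - T))"

lemma wedge_infinite: "infinite S \<Longrightarrow> wedge f g S = 0"
  by (simp add: wedge_def)

lemma wedge_empty [simp]: "wedge f g {} = f {} * g {}"
  by (simp add: wedge_def)

lemma wedge_assoc: "wedge (wedge f g) h = wedge f (wedge g h)"
proof
  fix S :: "'a set"
  show "wedge (wedge f g) h S = wedge f (wedge g h) S"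
  proof (cases "finite S")
    case False then show ?thesis by (simp add: wedge_infinite)
  next
    case fin: True
    let ?F = "\<lambda>A B. shuffle_sign A (S - A) * shuffle_sign B (S - A - B) * f A * g B * h (S - A - B)"
    have "wedge (wedge f g) h S = (\<Sum>T\<in>Pow S. \<Sum>A\<in>Pow T.
        shuffle_sign A (T - A) * shuffle_sign T (S - T) * f A * g (T - A) * h (S - T))"
      unfolding wedge_def by (simp add: sum_distrib_left sum_distrib_right algebra_simps)
    also have "\<dots> = (\<Sum>A\<in>Pow S. \<Sum>B\<in>Pow (S - A). ?F A B)"
      unfolding sum_Pow_Pow[OF fin]
    proof (intro sum.cong refl)
      fix A B assume "A \<in> Pow S" "B \<in> Pow (S - A)"
      moreover from this have "finite A" "finite B" using fin by (auto intro: finite_subset)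
      moreover have "B \<union> (S - A - B) = S - A" using \<open>B \<in> Pow (S - A)\<close> by auto
      ultimately have sign: "shuffle_sign A B * shuffle_sign (A \<union> B) (S - A - B)
          = shuffle_sign A (S - A) * shuffle_sign B (S - A - B)"
        using fin shuffle_sign_cocycle[of A B "S - A - B"] by auto
      have "A \<union> B - A = B" "S - (A \<union> B) = S - A - B" using \<open>B \<in> Pow (S - A)\<close> by auto
      then show "shuffle_sign A (A \<union> B - A) * shuffle_sign (A \<union> B) (S - (A \<union> B))
          * f A * g (A \<union> B - A) * h (S - (A \<union> B)) = ?F A B"
        by (simp only: sign)
    qed
    also have "\<dots> = wedge f (wedge g h) S"
      unfolding wedge_def by (simp add: sum_distrib_left sum_distrib_right algebra_simps)
    finally show ?thesis .
  qed
qed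

lemma wedge_eq_sum_complement:
  "wedge f g S = (\<Sum>I\<in>Pow S. shuffle_sign (S - I) I * f (S - I) * g I)"
proof -
  have inj: "inj_on ((-) S) (Pow S)" by (auto simp: inj_on_def)
  have "Pow S = (-) S ` Pow S" by auto
  then have "wedge f g S = (\<Sum>T\<in>(-) S ` Pow S. shuffle_sign T (S - T) * f T * g (S - T))"
    unfolding wedge_def by simp
  also have "\<dots> = (\<Sum>I\<in>Pow S. shuffle_sign (S - I) (S - (S - I)) * f (S - I) * g (S - (S - I)))"
    by (simp add: sum.reindex[OF inj])
  also have "\<dots> = (\<Sum>I\<in>Pow S. shuffle_sign (S - I) I * f (S - I) * g I)"
    by (intro sum.cong) (auto simp: double_diff)
  finally show ?thesis .
qed

lemma wedge_commute:
  assumes even_support: "\<And>U. f U \<noteq> 0 \<Longrightarrow> even (card U)"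
  shows "wedge g f = wedge f g"
proof
  fix S :: "'a set"
  show "wedge g f S = wedge f g S"
  proof (cases "finite S")
    case False then show ?thesis by (simp add: wedge_infinite)
  next
    case True
    have "shuffle_sign (S - I) I * g (S - I) * f I = shuffle_sign I (S - I) * f I * g (S - I)"
      if "I \<in> Pow S" for I
    proof (cases "f I = 0")
      case False
      then have "shuffle_sign (S - I) I = shuffle_sign I (S - I)"
        using that True even_support by (intro shuffle_sign_commute) (auto intro: finite_subset)
      then show ?thesis by simp
    qed simp
    then show ?thesis
      unfolding wedge_eq_sum_complement[of g] unfolding wedge_def by (rule sum.cong[OF refl])
  qed
qed

lemma wedge_insert_max:
  assumes "finite U" "\<forall>u\<in>U. u < x"
  shows "wedge f g (insert x U)
    = (\<Sum>T\<in>Pow U. shuffle_sign T (U - T) * f T * g (insert x (U - T)))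
    + (\<Sum>T\<in>Pow U. (-1) ^ card (U - T) * shuffle_sign T (U - T) * f (insert x T) * g (U - T))"
proof -
  have x: "x \<notin> U" using assms(2) by auto
  have inj: "inj_on (insert x) (Pow U)"
  proof (rule inj_onI)
    fix A B assume "A \<in> Pow U" "B \<in> Pow U" "insert x A = insert x B"
    then have "insert x A - {x} = insert x B - {x}" "x \<notin> A" "x \<notin> B" using x by auto
    then show "A = B" by simp
  qed
  have "wedge f g (insert x U)
      = (\<Sum>T\<in>Pow U. shuffle_sign T (insert x U - T) * f T * g (insert x U - T))
      + (\<Sum>T\<in>insert x ` Pow U. shuffle_sign T (insert x U - T) * f T * g (insert x U - T))"
    unfolding wedge_def Pow_insert by (rule sum.union_disjoint) (use assms x in auto)
  also have "(\<Sum>T\<in>Pow U. shuffle_sign T (insert x U - T) * f T * g (insert x U - T))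
      = (\<Sum>T\<in>Pow U. shuffle_sign T (U - T) * f T * g (insert x (U - T)))"
  proof (rule sum.cong[OF refl])
    fix T assume "T \<in> Pow U"
    then have "finite T" "\<forall>a\<in>T. a < x" "insert x U - T = insert x (U - T)"
      using assms x by (auto intro: finite_subset)
    then show "shuffle_sign T (insert x U - T) * f T * g (insert x U - T)
        = shuffle_sign T (U - T) * f T * g (insert x (U - T))"
      using assms x by (simp add: shuffle_sign_insert_max_right)
  qed
  also have "(\<Sum>T\<in>insert x ` Pow U. shuffle_sign T (insert x U - T) * f T * g (insert x U - T))
      = (\<Sum>T\<in>Pow U. (-1) ^ card (U - T) * shuffle_sign T (U - T) * f (insert x T) * g (U - T))"
  proof (subst sum.reindex[OF inj], rule sum.cong[OF refl])
    fix T assume "T \<in> Pow U"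
    then have "finite T" "x \<notin> T" "insert x U - insert x T = U - T"
      using assms x by (auto intro: finite_subset)
    then show "((\<lambda>T. shuffle_sign T (insert x U - T) * f T * g (insert x U - T)) \<circ> insert x) T
        = (-1) ^ card (U - T) * shuffle_sign T (U - T) * f (insert x T) * g (U - T)"
      using assms by (simp add: shuffle_sign_insert_max_left)
  qed
  finally show ?thesis .
qed

lemma wedge_right_cancel:
  assumes unit: "h {} = 1"
    and known: "\<And>S. finite S \<Longrightarrow> P S \<Longrightarrow> f S = g S"
    and wedge_eq: "\<And>S. finite S \<Longrightarrow> \<not> P S \<Longrightarrow> wedge f h S = wedge g h S"
    and "finite S"
  shows "f S = g S"
  using \<open>finite S\<close>
proof (induction rule: finite_psubset_induct)
  case (psubset S)
  show ?case
  proof (cases "P S")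
    case False
    have split: "wedge k h S = k S + (\<Sum>T\<in>Pow S - {S}. shuffle_sign T (S - T) * k T * h (S - T))" for k
      unfolding wedge_def using psubset.hyps unit by (subst sum.remove[of _ S]) auto
    have "(\<Sum>T\<in>Pow S - {S}. shuffle_sign T (S - T) * f T * h (S - T))
        = (\<Sum>T\<in>Pow S - {S}. shuffle_sign T (S - T) * g T * h (S - T))"
      using psubset.IH by (intro sum.cong) auto
    then show ?thesis using wedge_eq[OF psubset.hyps False] split[of f] split[of g] by simp
  qed (use known psubset.hyps in blast)
qed

section \<open>Pfaffians\<close>

lemma finite_insert_max_induct [consumes 1, case_names empty insert_max]:
  fixes S :: "'a::linorder set"
  assumes "finite S"
    and "P {}"
    and "\<And>x U. finite U \<Longrightarrow> \<forall>u\<in>U. u < x \<Longrightarrow> (\<And>V. V \<subset> insert x U \<Longrightarrow> P V) \<Longrightarrow> P (insert x U)"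
  shows "P S"
  using assms(1)
proof (induction rule: finite_psubset_induct)
  case (psubset S)
  show ?case
  proof (cases "S = {}")
    case False
    with psubset.hyps have "Max S \<in> S" by simp
    then have "S = insert (Max S) (S - {Max S})" "\<forall>u\<in>S - {Max S}. u < Max S"
      using psubset.hyps by (auto simp: order.strict_iff_order)
    then show ?thesis using assms(3)[of "S - {Max S}" "Max S"] psubset by (metis finite_Diff)
  qed (use assms(2) in simp)
qed

function pfaffian :: "('a::linorder \<Rightarrow> 'a \<Rightarrow> int) \<Rightarrow> 'a set \<Rightarrow> int" where
  "pfaffian c S = (if S = {} then 1 else if infinite S then 0 else
     (\<Sum>y\<in>S - {Max S}. shuffle_sign (S - {Max S}) {y} * c y (Max S)
        * pfaffian c (S - {Max S} - {y})))"
  by pat_completeness auto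
termination
proof (relation "measure (\<lambda>(c, S). card S)")
  fix c and S :: "'a set" and y
  assume "S \<noteq> {}" "\<not> infinite S" "y \<in> S - {Max S}"
  then show "((c, S - {Max S} - {y}), c, S) \<in> measure (\<lambda>(c, S). card S)"
    by (simp add: card_gt_0_iff)
qed auto

declare pfaffian.simps [simp del]

lemma pfaffian_empty [simp]: "pfaffian c {} = 1"
  by (simp add: pfaffian.simps)

lemma pfaffian_infinite: "infinite S \<Longrightarrow> pfaffian c S = 0"
  by (subst pfaffian.simps) auto

lemma pfaffian_insert_max:
  assumes "finite U" "\<forall>u\<in>U. u < x"
  shows "pfaffian c (insert x U) = (\<Sum>y\<in>U. shuffle_sign U {y} * c y x * pfaffian c (U - {y}))"
proof -
  have "Max (insert x U) = x" "insert x U - {x} = U" using assms by (auto intro!: Max_eqI)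
  then show ?thesis by (subst pfaffian.simps) (simp add: assms(1))
qed

lemma pfaffian_singleton [simp]: "pfaffian c {a} = 0"
  using pfaffian_insert_max[of "{}" a c] by simp

lemma pfaffian_pair:
  assumes "a < b"
  shows "pfaffian c {a, b} = c a b"
  using pfaffian_insert_max[of "{a}" b c] assms by (simp add: insert_commute)

lemma pfaffian_odd:
  assumes "odd (card S)"
  shows "pfaffian c S = 0"
proof (cases "finite S")
  case True
  then show ?thesis using assms
  proof (induction rule: finite_insert_max_induct)
    case (insert_max x U)
    have "pfaffian c (U - {y}) = 0" if "y \<in> U" for y
      using that insert_max by (intro insert_max.IH) (auto simp: card_insert_if card_Diff_singleton_if)
    then show ?case using insert_max.hyps by (simp add: pfaffian_insert_max)
  qed simp
qed (simp add: pfaffian_infinite)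

lemma pfaffian_even_support: "pfaffian c S \<noteq> 0 \<Longrightarrow> even (card S)"
  using pfaffian_odd by blast

lemma pfaffian_eq_0_on:
  assumes "\<not> Z {}"
    and closed: "\<And>x U y. finite U \<Longrightarrow> \<forall>u\<in>U. u < x \<Longrightarrow> y \<in> U \<Longrightarrow> Z (insert x U) \<Longrightarrow> c y x = 0 \<or> Z (U - {y})"
    and "finite S" "Z S"
  shows "pfaffian c S = 0"
  using \<open>finite S\<close> \<open>Z S\<close>
proof (induction rule: finite_insert_max_induct)
  case (insert_max x U)
  have "shuffle_sign U {y} * c y x * pfaffian c (U - {y}) = 0" if "y \<in> U" for y
    using closed[OF insert_max.hyps that insert_max.prems] that insert_max.IH[of "U - {y}"] by auto
  then show ?case unfolding pfaffian_insert_max[OF insert_max.hyps] by (rule sum.neutral[rule_format])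
qed (use assms(1) in simp)

lemma sum_wedge_insert_max_pfaffian_right:
  assumes U: "finite U" "\<forall>u\<in>U. u < x"
  shows "(\<Sum>T\<in>Pow U. shuffle_sign T (U - T) * f T * pfaffian c (insert x (U - T)))
       = (\<Sum>y\<in>U. shuffle_sign U {y} * c y x * wedge f (pfaffian c) (U - {y}))"
proof -
  have "(\<Sum>T\<in>Pow U. shuffle_sign T (U - T) * f T * pfaffian c (insert x (U - T)))
      = (\<Sum>T\<in>Pow U. \<Sum>y\<in>U - T. shuffle_sign T (U - T) * shuffle_sign (U - T) {y} * c y x
           * (f T * pfaffian c (U - T - {y})))"
    using U by (intro sum.cong refl) (simp add: pfaffian_insert_max sum_distrib_left algebra_simps)
  also have "\<dots> = (\<Sum>y\<in>U. \<Sum>T\<in>Pow (U - {y}). shuffle_sign T (U - T) * shuffle_sign (U - T) {y}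
           * c y x * (f T * pfaffian c (U - T - {y})))"
    by (rule sum_Pow_notin_swap[OF U(1)])
  also have "\<dots> = (\<Sum>y\<in>U. \<Sum>T\<in>Pow (U - {y}). shuffle_sign U {y} * c y x
           * (shuffle_sign T (U - {y} - T) * f T * pfaffian c (U - {y} - T)))"
  proof (intro sum.cong refl)
    fix y T assume "y \<in> U" "T \<in> Pow (U - {y})"
    moreover have "U - T - {y} = U - {y} - T" by auto
    ultimately show "shuffle_sign T (U - T) * shuffle_sign (U - T) {y} * c y x * (f T * pfaffian c (U - T - {y}))
        = shuffle_sign U {y} * c y x * (shuffle_sign T (U - {y} - T) * f T * pfaffian c (U - {y} - T))"
      using U(1) by (simp add: shuffle_sign_remove_point_right algebra_simps)
  qed
  also have "\<dots> = (\<Sum>y\<in>U. shuffle_sign U {y} * c y x * wedge f (pfaffian c) (U - {y}))"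
    unfolding wedge_def by (simp add: sum_distrib_left)
  finally show ?thesis .
qed

lemma sum_wedge_insert_max_pfaffian_left:
  assumes U: "finite U" "\<forall>u\<in>U. u < x"
  shows "(\<Sum>T\<in>Pow U. (-1) ^ card (U - T) * shuffle_sign T (U - T) * pfaffian c (insert x T) * g (U - T))
       = (\<Sum>y\<in>U. shuffle_sign U {y} * c y x * wedge (pfaffian c) g (U - {y}))"
proof -
  have "(\<Sum>T\<in>Pow U. (-1) ^ card (U - T) * shuffle_sign T (U - T) * pfaffian c (insert x T) * g (U - T))
      = (\<Sum>T\<in>Pow U. \<Sum>y\<in>T. (-1) ^ card (U - T) * shuffle_sign T (U - T) * shuffle_sign T {y} * c y x
           * (pfaffian c (T - {y}) * g (U - T)))"
  proof (intro sum.cong refl)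
    fix T assume "T \<in> Pow U"
    then have "finite T" "\<forall>u\<in>T. u < x" using U by (auto intro: finite_subset)
    then show "(-1) ^ card (U - T) * shuffle_sign T (U - T) * pfaffian c (insert x T) * g (U - T)
      = (\<Sum>y\<in>T. (-1) ^ card (U - T) * shuffle_sign T (U - T) * shuffle_sign T {y} * c y x
           * (pfaffian c (T - {y}) * g (U - T)))"
      by (simp add: pfaffian_insert_max sum_distrib_left sum_distrib_right algebra_simps)
  qed
  also have "\<dots> = (\<Sum>y\<in>U. \<Sum>T\<in>Pow (U - {y}). (-1) ^ card (U - insert y T)
           * shuffle_sign (insert y T) (U - insert y T) * shuffle_sign (insert y T) {y} * c y x
           * (pfaffian c (insert y T - {y}) * g (U - insert y T)))"
    by (rule sum_Pow_mem_swap[OF U(1)])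
  also have "\<dots> = (\<Sum>y\<in>U. \<Sum>T\<in>Pow (U - {y}). shuffle_sign U {y} * c y x
           * (shuffle_sign T (U - {y} - T) * pfaffian c T * g (U - {y} - T)))"
  proof (intro sum.cong refl)
    fix y T assume "y \<in> U" "T \<in> Pow (U - {y})"
    moreover from this have "U - insert y T = U - {y} - T" "insert y T - {y} = T" by auto
    ultimately show "(-1) ^ card (U - insert y T) * shuffle_sign (insert y T) (U - insert y T)
        * shuffle_sign (insert y T) {y} * c y x * (pfaffian c (insert y T - {y}) * g (U - insert y T))
      = shuffle_sign U {y} * c y x * (shuffle_sign T (U - {y} - T) * pfaffian c T * g (U - {y} - T))"
      using U(1) shuffle_sign_remove_point_left[OF U(1), of y T] by (simp add: algebra_simps)
  qed
  also have "\<dots> = (\<Sum>y\<in>U. shuffle_sign U {y} * c y x * wedge (pfaffian c) g (U - {y}))"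
    unfolding wedge_def by (simp add: sum_distrib_left)
  finally show ?thesis .
qed

lemma wedge_pfaffian_pfaffian: "wedge (pfaffian c) (pfaffian c') = pfaffian (\<lambda>y x. c y x + c' y x)"
proof
  fix S :: "'a set"
  show "wedge (pfaffian c) (pfaffian c') S = pfaffian (\<lambda>y x. c y x + c' y x) S"
  proof (cases "finite S")
    case True
    then show ?thesis
    proof (induction rule: finite_insert_max_induct)
      case (insert_max x U)
      have "wedge (pfaffian c) (pfaffian c') (insert x U)
          = (\<Sum>y\<in>U. shuffle_sign U {y} * c' y x * wedge (pfaffian c) (pfaffian c') (U - {y}))
          + (\<Sum>y\<in>U. shuffle_sign U {y} * c y x * wedge (pfaffian c) (pfaffian c') (U - {y}))"
        using insert_max.hyps by (simp add: wedge_insert_max sum_wedge_insert_max_pfaffian_right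
            sum_wedge_insert_max_pfaffian_left)
      also have "\<dots> = (\<Sum>y\<in>U. shuffle_sign U {y} * (c y x + c' y x)
          * pfaffian (\<lambda>y x. c y x + c' y x) (U - {y}))"
      proof -
        have "wedge (pfaffian c) (pfaffian c') (U - {y}) = pfaffian (\<lambda>y x. c y x + c' y x) (U - {y})"
          if "y \<in> U" for y
          using that insert_max.hyps by (intro insert_max.IH) auto
        then show ?thesis by (simp add: algebra_simps flip: sum.distrib)
      qed
      finally show ?case using insert_max.hyps by (simp add: pfaffian_insert_max)
    qed simp
  qed (simp add: wedge_infinite pfaffian_infinite)
qed

lemma pfaffian_neg_one:
  "pfaffian (\<lambda>_ _. -1) S = (if finite S \<and> even (card S) then (-1) ^ (card S div 2) else 0)"
proof -
  have "pfaffian (\<lambda>_ _. -1) S = (-1) ^ (card S div 2)" if "finite S" "even (card S)" for S :: "'a set"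
    using that
  proof (induction rule: finite_insert_max_induct)
    case (insert_max x U)
    have U: "x \<notin> U" "odd (card U)" "card U \<noteq> 0" using insert_max by auto
    have "pfaffian (\<lambda>_ _. -1) (U - {y}) = (-1) ^ ((card U - 1) div 2)" if "y \<in> U" for y
      using that insert_max U by (subst insert_max.IH) auto
    then have "pfaffian (\<lambda>_ _. -1) (insert x U)
        = - (\<Sum>y\<in>U. shuffle_sign U {y}) * (-1) ^ ((card U - 1) div 2)"
      using insert_max.hyps by (simp add: pfaffian_insert_max sum_distrib_right sum_negf)
    also have "\<dots> = (-1) ^ (card (insert x U) div 2)"
    proof -
      obtain m where "card U = 2 * m + 1" using U(2) by (rule oddE)
      then show ?thesis using U insert_max.hyps by (simp add: sum_shuffle_sign_singleton)
    qed
    finally show ?case .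
  qed simp
  moreover have "pfaffian (\<lambda>_ _. -1) S = 0" if "infinite S \<or> odd (card S)"
    using that pfaffian_infinite pfaffian_odd by blast
  ultimately show ?thesis by auto
qed

lemma finite_sorted_cases:
  fixes S :: "'a::linorder set"
  assumes "finite S"
  obtains
    (zero) "S = {}"
  | (one) a where "S = {a}"
  | (two) a b where "a < b" "S = {a, b}"
  | (three) a b c where "a < b" "b < c" "S = {a, b, c}"
  | (more) "4 \<le> card S"
proof -
  define xs where "xs = sorted_list_of_set S"
  have xs: "sorted_wrt (<) xs" "S = set xs" "length xs = card S"
    using assms by (simp_all add: xs_def)
  consider "length xs = 0" | "length xs = 1" | "length xs = 2" | "length xs = 3" | "4 \<le> length xs"
    by linarith
  then show ?thesis
  proof cases
    case 2
    then obtain a where "xs = [a]" by (auto simp: length_Suc_conv)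
    then show ?thesis using xs one by simp
  next
    case 3
    then obtain a b where "xs = [a, b]" by (auto simp: length_Suc_conv numeral_2_eq_2)
    then show ?thesis using xs two by simp
  next
    case 4
    then obtain a b c where "xs = [a, b, c]" by (auto simp: length_Suc_conv numeral_3_eq_3)
    then show ?thesis using xs by (intro three[of a b c]) auto
  qed (use xs zero more in simp_all)
qed

lemma pfaffian_four:
  assumes "a < b" "b < c" "c < d"
  shows "pfaffian k {a, b, c, d} = k a b * k c d - k a c * k b d + k a d * k b c"
proof -
  have diffs: "{a, b, c} - {a} = {b, c}" "{a, b, c} - {b} = {a, c}" "{a, b, c} - {c} = {a, b}"
    using assms by auto
  have "{a, b, c, d} = insert d {a, b, c}" by auto
  also have "pfaffian k (insert d {a, b, c})
      = (\<Sum>y\<in>{a, b, c}. shuffle_sign {a, b, c} {y} * (k y d * pfaffian k ({a, b, c} - {y})))"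
    unfolding mult.assoc[symmetric] by (rule pfaffian_insert_max) (use assms in auto)
  also have "\<dots> = k a d * pfaffian k {b, c} - k b d * pfaffian k {a, c} + k c d * pfaffian k {a, b}"
    using assms by (simp only: sum_shuffle_sign_triple diffs)
  finally show ?thesis using assms by (simp add: pfaffian_pair algebra_simps)
qed

lemma pfaffian_rank_two:
  assumes "3 \<le> card S"
  shows "pfaffian (\<lambda>y x. q x - q y) S = 0"
proof -
  have "finite S" using assms by (metis card.infinite not_numeral_le_zero)
  then show ?thesis using assms
  proof (induction rule: finite_insert_max_induct)
    case (insert_max x U)
    then have U: "x \<notin> U" "finite U" "2 \<le> card U" by auto
    consider "card U = 2" | "card U = 3" | "4 \<le> card U" using U by linarith
    then show ?case
    proof cases
      case 1
      then show ?thesis using U by (intro pfaffian_odd) simp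
    next
      case 2
      from U(2) 2 obtain a b c where "a < b" "b < c" "U = {a, b, c}"
        by (cases rule: finite_sorted_cases) auto
      moreover from this have "insert x U = {a, b, c, x}" "c < x" using insert_max.hyps by auto
      ultimately show ?thesis by (simp add: pfaffian_four algebra_simps)
    next
      case 3
      have "pfaffian (\<lambda>y x. q x - q y) (U - {y}) = 0" if "y \<in> U" for y
        using that 3 U by (intro insert_max.IH) auto
      then show ?thesis using insert_max.hyps by (simp add: pfaffian_insert_max)
    qed
  qed simp
qed

section \<open>Affine set functions\<close>

definition affine :: "('a::linorder \<Rightarrow> int) \<Rightarrow> 'a set \<Rightarrow> int" where
  "affine l S = (if S = {} then 1 else if card S = 1 then l (the_elem S) else 0)"

lemma affine_empty [simp]: "affine l {} = 1"
  by (simp add: affine_def)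

lemma affine_singleton [simp]: "affine l {a} = l a"
  by (simp add: affine_def)

lemma affine_eq_0: "2 \<le> card S \<Longrightarrow> affine l S = 0"
  by (auto simp: affine_def)

lemma wedge_affine_right:
  assumes "finite S"
  shows "wedge f (affine l) S = f S + (\<Sum>a\<in>S. shuffle_sign S {a} * l a * f (S - {a}))"
proof -
  let ?G = "\<lambda>I. shuffle_sign (S - I) I * f (S - I) * affine l I"
  have "?G I = 0" if "I \<in> Pow S - insert {} ((\<lambda>a. {a}) ` S)" for I
  proof -
    from that assms have "finite I" "I \<noteq> {}" "\<forall>a. I \<noteq> {a}" by (auto intro: finite_subset)
    then have "card I \<noteq> 0" "card I \<noteq> 1" by (auto simp: card_1_singleton_iff)
    then have "2 \<le> card I" by linarith
    then show ?thesis by (simp add: affine_eq_0)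
  qed
  then have "wedge f (affine l) S = (\<Sum>I\<in>insert {} ((\<lambda>a. {a}) ` S). ?G I)"
    unfolding wedge_eq_sum_complement using assms by (intro sum.mono_neutral_right) auto
  also have "\<dots> = ?G {} + (\<Sum>a\<in>S. ?G {a})"
    using assms by (subst sum.insert) (auto simp: sum.reindex inj_on_def)
  finally show ?thesis by (simp add: ac_simps)
qed

lemma wedge_affine_eq_0:
  assumes "finite S" "f S = 0" "\<And>a. a \<in> S \<Longrightarrow> l a * f (S - {a}) = 0"
  shows "wedge f (affine l) S = 0"
  unfolding wedge_affine_right[OF assms(1)] by (simp add: assms(2,3) mult.assoc)

lemma wedge_affine_uminus:
  assumes even_support: "\<And>U. f U \<noteq> 0 \<Longrightarrow> even (card U)" and S: "finite S"
  shows "wedge f (affine (\<lambda>a. - l a)) S = (-1) ^ card S * wedge f (affine l) S"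
proof (cases "even (card S)")
  case True
  then have "f (S - {a}) = 0" if "a \<in> S" for a
    using that S even_support[of "S - {a}"] by (auto simp: card_gt_0_iff)
  then show ?thesis using True S by (simp add: wedge_affine_right)
next
  case False
  then have "f S = 0" using even_support by blast
  then show ?thesis using False S by (simp add: wedge_affine_right sum_negf)
qed

lemma neg_one_power_eq: "even (m + n) \<Longrightarrow> (-1::int) ^ m = (-1) ^ n"
  by (metis neg_one_even_power neg_one_odd_power odd_add)

lemma neg_one_power_triangular: "(-1::int) ^ (n * (n - 1) div 2) = (-1) ^ (n div 2)"
proof (rule neg_one_power_eq)
  obtain m where "n = 2 * m \<or> n = 2 * m + 1" by (metis evenE oddE)
  then show "even (n * (n - 1) div 2 + n div 2)"
  proof
    assume "n = 2 * m"
    then have "n * (n - 1) div 2 + n div 2 = 2 * (m * m)" by (cases m) (auto simp: algebra_simps)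
    then show ?thesis by simp
  next
    assume "n = 2 * m + 1"
    then have "n * (n - 1) div 2 + n div 2 = 2 * (m * m + m)" by (simp add: algebra_simps)
    then show ?thesis by simp
  qed
qed

(* The sign of the permutation reversing the order of S. *)
definition rev_sign :: "'a set \<Rightarrow> int" where
  "rev_sign S = (if finite S then (-1) ^ (card S * (card S - 1) div 2) else 0)"

lemma wedge_pfaffian_affine_rev_sign: "wedge (pfaffian (\<lambda>_ _. -1)) (affine (\<lambda>_. 1)) = rev_sign"
proof
  fix S :: "'a set"
  show "wedge (pfaffian (\<lambda>_ _. -1)) (affine (\<lambda>_. 1)) S = rev_sign S"
  proof (cases "finite S")
    case True
    have "(\<Sum>a\<in>S. shuffle_sign S {a} * pfaffian (\<lambda>_ _. -1) (S - {a}))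
        = (if odd (card S) then (-1) ^ (card S div 2) else 0)"
    proof (cases "even (card S)")
      case False
      then have "pfaffian (\<lambda>_ _. -1) (S - {a}) = (-1) ^ (card S div 2)" if "a \<in> S" for a
        using that True by (auto simp: pfaffian_neg_one elim!: oddE)
      then show ?thesis using True False by (simp add: sum_distrib_right[symmetric] sum_shuffle_sign_singleton)
    next
      case even: True
      have "pfaffian (\<lambda>_ _. -1) (S - {a}) = 0" if "a \<in> S" for a
        using that True even by (intro pfaffian_odd) (auto simp: card_gt_0_iff)
      then show ?thesis using even by simp
    qed
    moreover have "wedge (pfaffian (\<lambda>_ _. -1)) (affine (\<lambda>_. 1)) S
        = pfaffian (\<lambda>_ _. -1) S + (\<Sum>a\<in>S. shuffle_sign S {a} * pfaffian (\<lambda>_ _. -1) (S - {a}))"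
      using wedge_affine_right[OF True] by simp
    ultimately show ?thesis
      using True unfolding rev_sign_def neg_one_power_triangular by (simp add: pfaffian_neg_one[of S])
  qed (simp add: wedge_infinite rev_sign_def)
qed

lemma wedge_affine_affine:
  "wedge (affine (\<lambda>a. - q a)) (affine (\<lambda>_. 1))
    = wedge (pfaffian (\<lambda>y x. q x - q y)) (affine (\<lambda>a. 1 - q a))"
  (is "wedge ?A ?One = wedge ?P ?B")
proof
  fix S :: "'a set"
  show "wedge ?A ?One S = wedge ?P ?B S"
  proof (cases "finite S")
    case True
    have L: "wedge ?A ?One S = ?A S + (\<Sum>a\<in>S. shuffle_sign S {a} * ?A (S - {a}))"
      using wedge_affine_right[OF True, of ?A "\<lambda>_. 1"] by simp
    have R: "wedge ?P ?B S = ?P S + (\<Sum>a\<in>S. shuffle_sign S {a} * ((1 - q a) * ?P (S - {a})))"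
      using wedge_affine_right[OF True, of ?P] by (simp add: mult.assoc)
    from True show ?thesis
    proof (cases rule: finite_sorted_cases)
      case (one a)
      show ?thesis unfolding L R unfolding one by simp
    next
      case (two a b)
      moreover have "{a, b} - {a} = {b}" "{a, b} - {b} = {a}" using two by auto
      ultimately show ?thesis
        unfolding L R unfolding two(2) by (simp only: sum_shuffle_sign_pair) (simp add: pfaffian_pair affine_eq_0)
    next
      case (three a b c)
      moreover have "{a, b, c} - {a} = {b, c}" "{a, b, c} - {b} = {a, c}" "{a, b, c} - {c} = {a, b}"
        using three by auto
      moreover have "card {a, b, c} = 3" using three by (auto simp: card_insert_if)
      ultimately show ?thesis
        unfolding L R unfolding three(3) by (simp only: sum_shuffle_sign_triple)
          (simp add: pfaffian_pair pfaffian_odd affine_eq_0 algebra_simps)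
    next
      case more
      then have "?A S = 0" "?P S = 0" using True by (simp_all add: affine_eq_0 pfaffian_rank_two)
      moreover have "?A (S - {a}) = 0" "?P (S - {a}) = 0" if "a \<in> S" for a
        using that more True by (simp_all add: affine_eq_0 pfaffian_rank_two)
      ultimately show ?thesis unfolding L R by simp
    qed simp
  qed (simp add: wedge_infinite)
qed

section \<open>The right-hand side as a set function\<close>

lemma s_blk_insert_remove:
  "finite U \<Longrightarrow> x \<notin> U \<Longrightarrow> y \<in> U \<Longrightarrow> s_blk (insert x U) lam = lam x + lam y + s_blk (U - {y}) lam"
  using sum.remove[of U y lam] by (simp add: s_blk_def)

lemma s_blk_remove:
  "finite S \<Longrightarrow> a \<in> S \<Longrightarrow> s_blk S lam = lam a + s_blk (S - {a}) lam"
  by (simp add: s_blk_def sum.remove)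

definition signed_c_sum :: "(nat \<Rightarrow> real) \<Rightarrow> nat set \<Rightarrow> int" where
  "signed_c_sum lam = wedge (pfaffian (\<lambda>y x. c2 (lam y) (lam x))) (affine (\<lambda>a. - c1 (lam a)))"

lemma signed_c_sum_empty: "signed_c_sum lam {} = 1"
  by (simp add: signed_c_sum_def)

lemma signed_c_sum_nonpos:
  assumes S: "finite S" "S \<noteq> {}" "s_blk S lam \<le> 0"
  shows "signed_c_sum lam S = 0"
proof -
  let ?Z = "\<lambda>S. S \<noteq> {} \<and> s_blk S lam \<le> 0"
  have W: "pfaffian (\<lambda>y x. c2 (lam y) (lam x)) T = 0" if "finite T" "?Z T" for T
  proof (rule pfaffian_eq_0_on[of ?Z])
    fix x U y assume "finite U" "\<forall>u\<in>U. u < x" "y \<in> U" "?Z (insert x U)"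
    moreover from this have "s_blk (insert x U) lam = lam x + lam y + s_blk (U - {y}) lam"
      by (intro s_blk_insert_remove) auto
    ultimately show "c2 (lam y) (lam x) = 0 \<or> ?Z (U - {y})"
      by (cases "U - {y} = {}") (auto simp: c2_def s_blk_def)
  qed (use that in auto)
  have "- c1 (lam a) * pfaffian (\<lambda>y x. c2 (lam y) (lam x)) (S - {a}) = 0" if "a \<in> S" for a
  proof (cases "lam a > 0")
    case True
    then have neg: "s_blk (S - {a}) lam < 0" using S that s_blk_remove[of S a lam] by simp
    have "S - {a} \<noteq> {}"
    proof
      assume "S - {a} = {}"
      with neg show False by (simp add: s_blk_def)
    qed
    with neg W S show ?thesis by simp
  qed (simp add: c1_def)
  then show ?thesis
    unfolding signed_c_sum_def using W[of S] S by (intro wedge_affine_eq_0) auto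
qed

lemma wedge_signed_c_sum_rev_sign:
  "wedge (signed_c_sum lam) rev_sign
    = wedge (pfaffian (\<lambda>y x. c2 (lam y) (lam x) - 1 + c1 (lam x) - c1 (lam y))) (affine (\<lambda>a. 1 - c1 (lam a)))"
proof -
  let ?W = "pfaffian (\<lambda>y x. c2 (lam y) (lam x))" and ?M = "pfaffian (\<lambda>_ _. -1)"
    and ?A = "affine (\<lambda>a. - c1 (lam a))" and ?One = "affine (\<lambda>_. 1)"
  have "wedge (signed_c_sum lam) rev_sign = wedge ?W (wedge (wedge ?A ?M) ?One)"
    unfolding signed_c_sum_def wedge_pfaffian_affine_rev_sign[symmetric] wedge_assoc ..
  also have "wedge ?A ?M = wedge ?M ?A"
    by (rule wedge_commute) (use pfaffian_even_support in blast)
  also have "wedge ?W (wedge (wedge ?M ?A) ?One) = wedge (wedge ?W ?M) (wedge ?A ?One)"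
    by (simp only: wedge_assoc)
  also have "\<dots> = wedge (pfaffian (\<lambda>y x. c2 (lam y) (lam x) + -1))
      (wedge (pfaffian (\<lambda>y x. c1 (lam x) - c1 (lam y))) (affine (\<lambda>a. 1 - c1 (lam a))))"
    by (simp only: wedge_pfaffian_pfaffian wedge_affine_affine)
  also have "\<dots> = wedge (pfaffian (\<lambda>y x. c2 (lam y) (lam x) + -1 + (c1 (lam x) - c1 (lam y))))
      (affine (\<lambda>a. 1 - c1 (lam a)))"
    by (simp only: wedge_assoc[symmetric] wedge_pfaffian_pfaffian)
  finally show ?thesis by (simp add: algebra_simps)
qed

(* This is where the values of c1 and c2 matter: the pair coefficient vanishes whenever
   lam y + lam x > 0, and 1 - c1 (lam a) vanishes whenever lam a > 0. *)
lemma wedge_signed_c_sum_rev_sign_pos: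
  assumes S: "finite S" "0 < s_blk S lam"
  shows "wedge (signed_c_sum lam) rev_sign S = 0"
proof -
  let ?d = "\<lambda>y x. c2 (lam y) (lam x) - 1 + c1 (lam x) - c1 (lam y)"
  let ?Z = "\<lambda>S. 0 < s_blk S lam"
  have W: "pfaffian ?d T = 0" if "finite T" "?Z T" for T
  proof (rule pfaffian_eq_0_on[of ?Z])
    fix x U y assume "finite U" "\<forall>u\<in>U. u < x" "y \<in> U" "?Z (insert x U)"
    moreover from this have "s_blk (insert x U) lam = lam x + lam y + s_blk (U - {y}) lam"
      by (intro s_blk_insert_remove) auto
    ultimately show "?d y x = 0 \<or> ?Z (U - {y})"
      by (cases "lam y + lam x > 0") (auto simp: c1_def c2_def)
  qed (use that in \<open>auto simp: s_blk_def\<close>)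
  have "(1 - c1 (lam a)) * pfaffian ?d (S - {a}) = 0" if "a \<in> S" for a
  proof (cases "lam a > 0")
    case False
    then have "?Z (S - {a})" using S that s_blk_remove[of S a lam] by simp
    then show ?thesis using W S by simp
  qed (simp add: c1_def)
  then show ?thesis
    unfolding wedge_signed_c_sum_rev_sign using W[of S] S by (intro wedge_affine_eq_0) auto
qed

section \<open>Ordered partitions\<close>

lemma partition_on_insert_block:
  assumes "I \<notin> p"
  shows "partition_on S (insert I p) \<longleftrightarrow> I \<noteq> {} \<and> I \<subseteq> S \<and> partition_on (S - I) p"
proof
  assume part: "partition_on S (insert I p)"
  then have "disjnt I (\<Union>p)"
    using assms by (auto simp: partition_on_def pairwise_def disjnt_def)
  with part show "I \<noteq> {} \<and> I \<subseteq> S \<and> partition_on (S - I) p"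
    by (simp add: partition_on_insert)
next
  assume "I \<noteq> {} \<and> I \<subseteq> S \<and> partition_on (S - I) p"
  moreover from this have "disjnt I (\<Union>p)" by (auto simp: partition_on_def disjnt_def)
  ultimately show "partition_on S (insert I p)" by (simp add: partition_on_insert)
qed

definition ord_partition :: "'a set \<Rightarrow> 'a set list \<Rightarrow> bool" where
  "ord_partition S P \<longleftrightarrow> distinct P \<and> partition_on S (set P)"

lemma is_ord_partition_iff: "is_ord_partition n P \<longleftrightarrow> ord_partition {1..n} P"
proof
  assume P: "is_ord_partition n P"
  have "distinct P"
    unfolding distinct_conv_nth
  proof (intro allI impI)
    fix i j assume "i < length P" "j < length P" "i \<noteq> j"
    with P have "P ! i \<inter> P ! j = {}" "P ! i \<noteq> {}" by (auto simp: is_ord_partition_def)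
    then show "P ! i \<noteq> P ! j" by auto
  qed
  moreover have "disjoint (set P)"
  proof (rule pairwiseI)
    fix A B assume "A \<in> set P" "B \<in> set P" "A \<noteq> B"
    then obtain i j where "i < length P" "j < length P" "A = P ! i" "B = P ! j" "i \<noteq> j"
      by (metis in_set_conv_nth)
    then show "disjnt A B" using P by (auto simp: is_ord_partition_def disjnt_def)
  qed
  ultimately show "ord_partition {1..n} P"
    using P by (auto simp: is_ord_partition_def ord_partition_def partition_on_def)
next
  assume "ord_partition {1..n} P"
  then show "is_ord_partition n P"
    by (auto simp: is_ord_partition_def ord_partition_def partition_on_def pairwise_def disjnt_def
        nth_eq_iff_index_eq)
qed

lemma ord_partition_Nil [simp]: "ord_partition S [] \<longleftrightarrow> S = {}"
  by (auto simp: ord_partition_def partition_on_def)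

lemma ord_partition_Cons: "ord_partition S (A # Q) \<longleftrightarrow> A \<noteq> {} \<and> A \<subseteq> S \<and> ord_partition (S - A) Q"
proof (cases "A \<in> set Q")
  case True
  then show ?thesis by (auto simp: ord_partition_def partition_on_def)
qed (auto simp: ord_partition_def partition_on_insert_block)

lemma ord_partition_snoc: "ord_partition S (Q @ [I]) \<longleftrightarrow> I \<noteq> {} \<and> I \<subseteq> S \<and> ord_partition (S - I) Q"
proof (cases "I \<in> set Q")
  case True
  then show ?thesis by (auto simp: ord_partition_def partition_on_def)
qed (auto simp: ord_partition_def partition_on_insert_block)

lemma finite_ord_partitions: "finite S \<Longrightarrow> finite {P. ord_partition S P}"
  by (rule finite_subset[OF _ finite_subset_distinct[of "Pow S"]])
    (auto simp: ord_partition_def partition_on_def)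

lemma sum_list_s_blk:
  "ord_partition S P \<Longrightarrow> finite S \<Longrightarrow> (\<Sum>J\<leftarrow>P. s_blk J lam) = s_blk S lam"
proof (induction P arbitrary: S)
  case (Cons A Q)
  then have "A \<subseteq> S" "ord_partition (S - A) Q" by (auto simp: ord_partition_Cons)
  then show ?case using Cons.prems Cons.IH
    by (simp add: s_blk_def sum.subset_diff[of A S lam] add.commute)
qed (simp add: s_blk_def)

definition positive_prefixes :: "(nat \<Rightarrow> real) \<Rightarrow> nat set list \<Rightarrow> bool" where
  "positive_prefixes lam P \<longleftrightarrow> (\<forall>i. 1 \<le> i \<and> i \<le> length P \<longrightarrow> 0 < (\<Sum>J\<leftarrow>take i P. s_blk J lam))"

lemma positive_prefixes_snoc:
  "positive_prefixes lam (Q @ [I]) \<longleftrightarrow> positive_prefixes lam Q \<and> 0 < (\<Sum>J\<leftarrow>Q @ [I]. s_blk J lam)"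
proof -
  have "(\<forall>i. 1 \<le> i \<and> i \<le> Suc (length Q) \<longrightarrow> 0 < F i)
      \<longleftrightarrow> (\<forall>i. 1 \<le> i \<and> i \<le> length Q \<longrightarrow> 0 < F i) \<and> 0 < F (Suc (length Q))" for F :: "nat \<Rightarrow> real"
    by (auto simp: le_Suc_eq)
  then show ?thesis unfolding positive_prefixes_def by simp
qed

definition pos_ord_partitions :: "nat set \<Rightarrow> (nat \<Rightarrow> real) \<Rightarrow> nat set list set" where
  "pos_ord_partitions S lam = {P. ord_partition S P \<and> positive_prefixes lam P}"

lemma P_ord_eq: "P_ord n lam = pos_ord_partitions {1..n} lam"
  by (simp add: P_ord_def pos_ord_partitions_def positive_prefixes_def is_ord_partition_iff)

lemma pos_ord_partitions_empty: "pos_ord_partitions {} lam = {[]}"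
  by (auto simp: pos_ord_partitions_def positive_prefixes_def ord_partition_def partition_on_empty)

lemma pos_ord_partitions_nonpos:
  assumes "finite S" "S \<noteq> {}" "s_blk S lam \<le> 0"
  shows "pos_ord_partitions S lam = {}"
proof -
  have "\<not> positive_prefixes lam P" if "ord_partition S P" for P
  proof
    assume "positive_prefixes lam P"
    moreover have "P \<noteq> []" using that assms(2) by auto
    ultimately have "0 < (\<Sum>J\<leftarrow>P. s_blk J lam)"
      unfolding positive_prefixes_def by (metis One_nat_def Suc_leI length_greater_0_conv order.refl take_all)
    with sum_list_s_blk[OF that assms(1)] assms(3) show False by simp
  qed
  then show ?thesis by (auto simp: pos_ord_partitions_def)
qed

lemma pos_ord_partitions_pos:
  assumes "finite S" "0 < s_blk S lam"
  shows "pos_ord_partitions S lam = (\<Union>I\<in>Pow S - {{}}. (\<lambda>Q. Q @ [I]) ` pos_ord_partitions (S - I) lam)"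
proof (intro equalityI subsetI)
  fix P assume P: "P \<in> pos_ord_partitions S lam"
  have "S \<noteq> {}" using assms(2) by (auto simp: s_blk_def)
  then have "P \<noteq> []" using P by (auto simp: pos_ord_partitions_def)
  then obtain Q I where "P = Q @ [I]" by (metis rev_exhaust)
  with P show "P \<in> (\<Union>I\<in>Pow S - {{}}. (\<lambda>Q. Q @ [I]) ` pos_ord_partitions (S - I) lam)"
    by (auto simp: pos_ord_partitions_def ord_partition_snoc positive_prefixes_snoc)
next
  fix P assume "P \<in> (\<Union>I\<in>Pow S - {{}}. (\<lambda>Q. Q @ [I]) ` pos_ord_partitions (S - I) lam)"
  then obtain I Q where "I \<in> Pow S - {{}}" "Q \<in> pos_ord_partitions (S - I) lam" "P = Q @ [I]" by blast
  moreover from this have "ord_partition S P" by (auto simp: pos_ord_partitions_def ord_partition_snoc)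
  ultimately show "P \<in> pos_ord_partitions S lam"
    using assms sum_list_s_blk[of S P lam]
    by (auto simp: pos_ord_partitions_def positive_prefixes_snoc)
qed

primrec blocks_sign :: "'a::linorder set list \<Rightarrow> int" where
  "blocks_sign [] = 1"
| "blocks_sign (A # P) = shuffle_sign A (\<Union>(set P)) * blocks_sign P"

lemma blocks_sign_snoc:
  "ord_partition S (Q @ [I]) \<Longrightarrow> finite S \<Longrightarrow> blocks_sign (Q @ [I]) = blocks_sign Q * shuffle_sign (S - I) I"
proof (induction Q arbitrary: S)
  case (Cons A Q)
  then have A: "A \<subseteq> S" "ord_partition (S - A) (Q @ [I])" by (auto simp: ord_partition_Cons)
  then have "I \<subseteq> S - A" "ord_partition (S - A - I) Q" by (auto simp: ord_partition_snoc)
  then have I: "I \<subseteq> S - A" "\<Union>(set Q) = S - A - I" by (simp_all add: ord_partition_def partition_on_def)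
  have fin: "finite A" "finite I" "finite (S - A - I)" using A I Cons.prems(2) by (auto intro: finite_subset)
  have u: "\<Union>(set (Q @ [I])) = (S - A - I) \<union> I" and e: "S - I = A \<union> (S - A - I)" using A I by auto
  have s1: "shuffle_sign A ((S - A - I) \<union> I) = shuffle_sign A (S - A - I) * shuffle_sign A I"
    by (rule shuffle_sign_Un_right) (use fin in auto)
  have s2: "shuffle_sign (A \<union> (S - A - I)) I = shuffle_sign A I * shuffle_sign (S - A - I) I"
    by (rule shuffle_sign_Un_left) (use fin in auto)
  have "blocks_sign ((A # Q) @ [I])
      = shuffle_sign A (S - A - I) * shuffle_sign A I * (blocks_sign Q * shuffle_sign (S - A - I) I)"
    using Cons.IH[OF A(2)] Cons.prems(2) by (simp only: append_Cons blocks_sign.simps u s1) simp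
  also have "\<dots> = shuffle_sign A (S - A - I) * blocks_sign Q * shuffle_sign (A \<union> (S - A - I)) I"
    unfolding s2 by (simp add: algebra_simps)
  finally show ?case unfolding e[symmetric] using I by simp
next
  case Nil
  then have "S - I = {}" using ord_partition_snoc[of S "[]" I] by simp
  then have "shuffle_sign (S - I) I = shuffle_sign {} I" by (rule arg_cong)
  then show ?case by simp
qed

lemma eps'_insert: "finite p \<Longrightarrow> finite I \<Longrightarrow> I \<notin> p \<Longrightarrow> eps' (insert I p) = eps' p * rev_sign I"
  by (simp add: eps'_def rev_sign_def power_add)

definition ord_partition_sum :: "(nat \<Rightarrow> real) \<Rightarrow> nat set \<Rightarrow> int" where
  "ord_partition_sum lam S = (\<Sum>P\<in>pos_ord_partitions S lam. (-1) ^ length P * blocks_sign P * eps' (set P))"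

lemma ord_partition_sum_empty: "ord_partition_sum lam {} = 1"
  by (simp add: ord_partition_sum_def pos_ord_partitions_empty eps'_def)

lemma ord_partition_sum_nonpos:
  "finite S \<Longrightarrow> S \<noteq> {} \<Longrightarrow> s_blk S lam \<le> 0 \<Longrightarrow> ord_partition_sum lam S = 0"
  by (simp add: ord_partition_sum_def pos_ord_partitions_nonpos)

lemma ord_partition_sum_pos:
  assumes fin: "finite S" and pos: "0 < s_blk S lam"
  shows "ord_partition_sum lam S
    = - (\<Sum>I\<in>Pow S - {{}}. shuffle_sign (S - I) I * ord_partition_sum lam (S - I) * rev_sign I)"
proof -
  let ?w = "\<lambda>P. (-1) ^ length P * blocks_sign P * eps' (set P)"
  have fin_pos: "finite (pos_ord_partitions T lam)" if "finite T" for T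
    using finite_ord_partitions[OF that] by (rule finite_subset[rotated]) (auto simp: pos_ord_partitions_def)
  have "ord_partition_sum lam S = (\<Sum>I\<in>Pow S - {{}}. \<Sum>P\<in>(\<lambda>Q. Q @ [I]) ` pos_ord_partitions (S - I) lam. ?w P)"
    unfolding ord_partition_sum_def pos_ord_partitions_pos[OF fin pos]
    by (rule sum.UNION_disjoint) (use fin fin_pos in auto)
  also have "\<dots> = (\<Sum>I\<in>Pow S - {{}}. \<Sum>Q\<in>pos_ord_partitions (S - I) lam. ?w (Q @ [I]))"
    by (simp add: sum.reindex inj_on_def)
  also have "\<dots> = (\<Sum>I\<in>Pow S - {{}}. \<Sum>Q\<in>pos_ord_partitions (S - I) lam.
      - (shuffle_sign (S - I) I * ?w Q * rev_sign I))"
  proof (intro sum.cong refl)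
    fix I Q assume "I \<in> Pow S - {{}}" "Q \<in> pos_ord_partitions (S - I) lam"
    then have "ord_partition S (Q @ [I])" by (auto simp: pos_ord_partitions_def ord_partition_snoc)
    moreover from this have "I \<notin> set Q" by (simp add: ord_partition_def)
    moreover from \<open>ord_partition S (Q @ [I])\<close> have "finite I"
      using fin by (auto simp: ord_partition_snoc intro: finite_subset)
    ultimately show "?w (Q @ [I]) = - (shuffle_sign (S - I) I * ?w Q * rev_sign I)"
      using fin by (simp add: blocks_sign_snoc eps'_insert)
  qed
  finally show ?thesis by (simp add: ord_partition_sum_def sum_distrib_left sum_distrib_right sum_negf)
qed

lemma wedge_ord_partition_sum_rev_sign_pos:
  assumes "finite S" "0 < s_blk S lam"
  shows "wedge (ord_partition_sum lam) rev_sign S = 0"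
proof -
  have "wedge (ord_partition_sum lam) rev_sign S
      = ord_partition_sum lam S + (\<Sum>I\<in>Pow S - {{}}. shuffle_sign (S - I) I * ord_partition_sum lam (S - I) * rev_sign I)"
    unfolding wedge_eq_sum_complement using assms(1) by (subst sum.remove[of _ "{}"]) (auto simp: rev_sign_def)
  then show ?thesis using ord_partition_sum_pos[OF assms] by simp
qed

lemma ord_partition_sum_eq_signed_c_sum:
  "finite S \<Longrightarrow> ord_partition_sum lam S = signed_c_sum lam S"
proof (rule wedge_right_cancel[where P = "\<lambda>S. S = {} \<or> s_blk S lam \<le> 0" and h = rev_sign])
  fix T :: "nat set" assume "finite T" "T = {} \<or> s_blk T lam \<le> 0"
  then show "ord_partition_sum lam T = signed_c_sum lam T"
    by (cases "T = {}")
      (simp_all add: ord_partition_sum_empty signed_c_sum_empty ord_partition_sum_nonpos signed_c_sum_nonpos)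
qed (simp_all add: rev_sign_def wedge_ord_partition_sum_rev_sign_pos wedge_signed_c_sum_rev_sign_pos)

section \<open>The sign of the permutation of an ordered partition\<close>

primrec inversions :: "'a::linorder list \<Rightarrow> nat" where
  "inversions [] = 0"
| "inversions (x # xs) = card {y \<in> set xs. y < x} + inversions xs"

lemma inversions_append:
  "distinct (xs @ ys) \<Longrightarrow> inversions (xs @ ys) = inversions xs + inversions ys + inversions_between (set xs) (set ys)"
proof (induction xs)
  case (Cons x xs)
  then have "{y \<in> set (xs @ ys). y < x} = {y \<in> set xs. y < x} \<union> {y \<in> set ys. y < x}"
    and "{y \<in> set xs. y < x} \<inter> {y \<in> set ys. y < x} = {}" by auto
  then have "card {y \<in> set (xs @ ys). y < x} = card {y \<in> set xs. y < x} + card {y \<in> set ys. y < x}"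
    by (simp add: card_Un_disjoint)
  moreover have "inversions_between ({x} \<union> set xs) (set ys)
      = inversions_between {x} (set ys) + inversions_between (set xs) (set ys)"
    using Cons.prems by (intro inversions_between_Un_left) auto
  ultimately show ?case using Cons by (simp add: inversions_between_singleton_left)
qed (simp add: inversions_between_def)

lemma inversions_eq_0_iff: "inversions xs = 0 \<longleftrightarrow> sorted xs"
  by (induction xs) (auto simp: not_less)

lemma not_sorted_descent:
  "\<not> sorted (xs :: 'a::linorder list) \<Longrightarrow> \<exists>us a b vs. xs = us @ a # b # vs \<and> b < a"
proof (induction xs)
  case (Cons x xs)
  show ?case
  proof (cases "\<exists>y ys. xs = y # ys \<and> y < x")
    case False
    then have "\<not> sorted xs"
      using Cons.prems by (cases xs) (auto simp: not_less intro: order.trans)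
    then obtain us a b vs where "xs = us @ a # b # vs" "b < a" using Cons.IH by blast
    then show ?thesis by (intro exI[of _ "x # us"]) auto
  qed (metis append_Nil)
qed simp

lemma inversions_swap:
  assumes "distinct (us @ a # b # vs)" "b < a"
  shows "inversions (us @ a # b # vs) = Suc (inversions (us @ b # a # vs))"
  using assms
proof (induction us)
  case Nil
  then have "{y \<in> set (b # vs). y < a} = insert b {y \<in> set vs. y < a}"
    and "{y \<in> set (a # vs). y < b} = {y \<in> set vs. y < b}" by auto
  then show ?case using Nil by simp
next
  case (Cons u us)
  have "set (us @ a # b # vs) = set (us @ b # a # vs)" by auto
  then show ?case using Cons by simp
qed

definition list_perm :: "nat \<Rightarrow> nat list \<Rightarrow> nat \<Rightarrow> nat" where
  "list_perm n xs = (\<lambda>j. if 1 \<le> j \<and> j \<le> n then xs ! (j - 1) else j)"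

lemma list_perm_permutes:
  assumes "distinct xs" "set xs = {1..n}"
  shows "list_perm n xs permutes {1..n}"
proof (rule bij_imp_permutes)
  have "length xs = n" using distinct_card[OF assms(1)] assms(2) by simp
  then have "bij_betw ((!) xs) {..<n} {1..n}" using assms by (intro bij_betw_nth) auto
  moreover have "bij_betw (\<lambda>j. j - 1) {1..n} {..<n}" by (rule bij_betw_byWitness[where f' = Suc]) auto
  ultimately have "bij_betw ((!) xs \<circ> (\<lambda>j. j - 1)) {1..n} {1..n}" by (metis bij_betw_trans)
  moreover have "bij_betw (list_perm n xs) {1..n} {1..n} = bij_betw ((!) xs \<circ> (\<lambda>j. j - 1)) {1..n} {1..n}"
    by (rule bij_betw_cong) (simp add: list_perm_def)
  ultimately show "bij_betw (list_perm n xs) {1..n} {1..n}" by simp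
qed (auto simp: list_perm_def)

lemma list_perm_swap:
  assumes "length (us @ a # b # vs) = n"
  shows "list_perm n (us @ a # b # vs)
    = list_perm n (us @ b # a # vs) \<circ> Transposition.transpose (length us + 1) (length us + 2)"
proof
  fix j
  have "(us @ a # b # vs) ! (j - 1) = (us @ b # a # vs) ! (j - 1)"
    if "j \<noteq> length us + 1" "j \<noteq> length us + 2" "1 \<le> j"
    using that by (cases "j - 1 < length us") (auto simp: nth_append nth_Cons split: nat.split)
  then show "list_perm n (us @ a # b # vs) j
      = (list_perm n (us @ b # a # vs) \<circ> Transposition.transpose (length us + 1) (length us + 2)) j"
    using assms by (auto simp: list_perm_def nth_append transpose_def)
qed

lemma sign_list_perm:
  "distinct xs \<Longrightarrow> set xs = {1..n} \<Longrightarrow> sign (list_perm n xs) = (-1) ^ inversions xs"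
proof (induction "inversions xs" arbitrary: xs)
  case 0
  then have "sorted xs" by (simp add: inversions_eq_0_iff)
  moreover have "set xs = set [1..<Suc n]"
    using 0 by (simp add: atLeastLessThanSuc_atLeastAtMost del: upt_Suc)
  ultimately have "xs = [1..<Suc n]" using 0 by (intro sorted_distinct_set_unique) (simp_all del: upt_Suc)
  then have "list_perm n xs = id" by (auto simp: list_perm_def fun_eq_iff nth_upt simp del: upt_Suc)
  then show ?case using 0 by simp
next
  case (Suc m)
  then have "\<not> sorted xs" by (metis inversions_eq_0_iff nat.distinct(1))
  then obtain us a b vs where xs: "xs = us @ a # b # vs" and "b < a" using not_sorted_descent by blast
  define ys where "ys = us @ b # a # vs"
  have ys: "distinct ys" "set ys = {1..n}" using Suc.prems by (auto simp: xs ys_def)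
  have inv: "inversions xs = Suc (inversions ys)"
    unfolding xs ys_def using Suc.prems xs \<open>b < a\<close> by (intro inversions_swap) auto
  have "list_perm n xs = list_perm n ys \<circ> Transposition.transpose (length us + 1) (length us + 2)"
    unfolding xs ys_def using distinct_card[OF Suc.prems(1)] Suc.prems(2) xs by (intro list_perm_swap) simp
  moreover have "permutation (list_perm n ys)"
    using list_perm_permutes[OF ys] by (rule permutes_imp_permutation[rotated]) simp
  ultimately have "sign (list_perm n xs) = - sign (list_perm n ys)"
    by (simp add: sign_compose permutation_swap_id sign_swap_id)
  with Suc.hyps ys inv show ?case by simp
qed

lemma concat_sorted_blocks:
  "ord_partition S P \<Longrightarrow> finite S
    \<Longrightarrow> distinct (concat (map sorted_list_of_set P)) \<and> set (concat (map sorted_list_of_set P)) = S"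
proof (induction P arbitrary: S)
  case (Cons A Q)
  then have "A \<subseteq> S" "ord_partition (S - A) Q" by (auto simp: ord_partition_Cons)
  moreover from this have "finite A" using Cons.prems(2) by (auto intro: finite_subset)
  ultimately show ?case using Cons.IH[of "S - A"] Cons.prems(2) by auto
qed simp

lemma inversions_concat_sorted_blocks:
  "ord_partition S P \<Longrightarrow> finite S \<Longrightarrow> (-1::int) ^ inversions (concat (map sorted_list_of_set P)) = blocks_sign P"
proof (induction P arbitrary: S)
  case (Cons A Q)
  then have A: "A \<subseteq> S" "ord_partition (S - A) Q" by (auto simp: ord_partition_Cons)
  then have "finite A" "\<Union>(set Q) = S - A"
    using Cons.prems(2) by (auto simp: ord_partition_def partition_on_def intro: finite_subset)
  moreover have "distinct (concat (map sorted_list_of_set (A # Q)))"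
    "set (concat (map sorted_list_of_set Q)) = S - A"
    using concat_sorted_blocks[OF Cons.prems] concat_sorted_blocks[OF A(2)] Cons.prems(2) by auto
  moreover have "inversions (sorted_list_of_set A) = 0" by (simp add: inversions_eq_0_iff)
  ultimately show ?case
    using Cons.IH[OF A(2)] Cons.prems(2) inversions_append[of "sorted_list_of_set A"]
    by (simp add: power_add shuffle_sign_def)
qed simp

lemma eps_ord_eq_blocks_sign:
  assumes "ord_partition {1..n} P"
  shows "eps_ord n P = blocks_sign P"
proof -
  let ?xs = "concat (map sorted_list_of_set P)"
  have xs: "distinct ?xs" "set ?xs = {1..n}" using concat_sorted_blocks[OF assms] by auto
  have "eps_ord n P = sign (inv (list_perm n ?xs))"
    by (simp add: eps_ord_def sigma_P_def sigma_inv_def list_perm_def)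
  also have "\<dots> = (-1) ^ inversions ?xs"
  proof -
    have "permutation (list_perm n ?xs)"
      using list_perm_permutes[OF xs] by (rule permutes_imp_permutation[rotated]) simp
    then show ?thesis using sign_list_perm[OF xs] by (simp add: sign_inverse)
  qed
  also have "\<dots> = blocks_sign P" using inversions_concat_sorted_blocks[OF assms] by simp
  finally show ?thesis .
qed

section \<open>Partitions into blocks of size at most two\<close>

definition commuting_blocks :: "'a::linorder set set \<Rightarrow> bool" where
  "commuting_blocks p \<longleftrightarrow> (\<forall>A\<in>p. finite A)
     \<and> (\<forall>A\<in>p. \<forall>B\<in>p. A \<noteq> B \<longrightarrow> A \<inter> B = {} \<and> shuffle_sign A B = shuffle_sign B A)"

lemma commuting_blocks_subset: "commuting_blocks p \<Longrightarrow> q \<subseteq> p \<Longrightarrow> commuting_blocks q"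
  unfolding commuting_blocks_def by blast

lemma blocks_sign_remove1:
  assumes "distinct Ps" "A \<in> set Ps" "commuting_blocks (set Ps)"
  shows "blocks_sign Ps = shuffle_sign A (\<Union>(set Ps - {A})) * blocks_sign (remove1 A Ps)"
  using assms
proof (induction Ps)
  case (Cons B Rs)
  show ?case
  proof (cases "A = B")
    case True
    then have "set (B # Rs) - {A} = set Rs" using Cons.prems(1) by auto
    then show ?thesis using True by simp
  next
    case False
    then have A: "A \<in> set Rs" using Cons.prems(2) by simp
    define X where "X = \<Union>(set Rs - {A})"
    have fin: "\<forall>C\<in>set (B # Rs). finite C"
      and comm: "\<forall>C\<in>set (B # Rs). \<forall>D\<in>set (B # Rs). C \<noteq> D \<longrightarrow> C \<inter> D = {} \<and> shuffle_sign C D = shuffle_sign D C"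
      using Cons.prems(3) unfolding commuting_blocks_def by blast+
    have B: "B \<notin> set Rs" using Cons.prems(1) by simp
    have inA: "A \<in> set (B # Rs)" and inB: "B \<in> set (B # Rs)" using A by simp_all
    have AB: "A \<inter> B = {}" "shuffle_sign A B = shuffle_sign B A" "finite A" "finite B"
      using comm[rule_format, OF inA inB False] fin inA inB by blast+
    have "A \<inter> C = {} \<and> B \<inter> C = {} \<and> finite C" if "C \<in> set Rs - {A}" for C
      using that comm[rule_format, OF inA, of C] comm[rule_format, OF inB, of C] fin B by auto
    then have disj: "A \<inter> X = {}" "B \<inter> X = {}" "finite X" unfolding X_def by auto
    have IH: "blocks_sign Rs = shuffle_sign A X * blocks_sign (remove1 A Rs)"
      using Cons.IH Cons.prems A commuting_blocks_subset[of "set (B # Rs)" "set Rs"] by (auto simp: X_def)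
    have "\<Union>(set Rs) = A \<union> X" "\<Union>(set (B # Rs) - {A}) = B \<union> X" "\<Union>(set (remove1 A Rs)) = X"
      using A False Cons.prems(1) by (auto simp: X_def)
    then have "blocks_sign (B # Rs) = shuffle_sign B A * shuffle_sign B X * shuffle_sign A X * blocks_sign (remove1 A Rs)"
      and "shuffle_sign A (\<Union>(set (B # Rs) - {A})) * blocks_sign (remove1 A (B # Rs))
        = shuffle_sign A B * shuffle_sign A X * shuffle_sign B X * blocks_sign (remove1 A Rs)"
      using IH AB disj False by (simp_all add: shuffle_sign_Un_right)
    then show ?thesis using AB by (simp add: algebra_simps)
  qed
qed simp

lemma blocks_sign_perm:
  "distinct Qs \<Longrightarrow> distinct Ps \<Longrightarrow> set Ps = set Qs \<Longrightarrow> commuting_blocks (set Ps)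
    \<Longrightarrow> blocks_sign Ps = blocks_sign Qs"
proof (induction Qs arbitrary: Ps)
  case (Cons A Qs)
  then have "set (remove1 A Ps) = set Qs" "set Ps - {A} = set Qs" by auto
  moreover have "commuting_blocks (set (remove1 A Ps))"
    using Cons.prems by (auto intro: commuting_blocks_subset)
  ultimately show ?case
    using Cons.IH[of "remove1 A Ps"] Cons.prems blocks_sign_remove1[of Ps A] by simp
qed simp

(* Independent of the enumeration only if the blocks commute (partition_sign_eq_blocks_sign). *)
definition partition_sign :: "'a::linorder set set \<Rightarrow> int" where
  "partition_sign p = blocks_sign (SOME Ps. distinct Ps \<and> set Ps = p)"

lemma partition_sign_eq_blocks_sign:
  assumes "distinct Ps" "set Ps = p" "commuting_blocks p"
  shows "partition_sign p = blocks_sign Ps"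
proof -
  have "\<exists>Ps. distinct Ps \<and> set Ps = p" using assms by blast
  then have "distinct (SOME Ps. distinct Ps \<and> set Ps = p) \<and> set (SOME Ps. distinct Ps \<and> set Ps = p) = p"
    by (rule someI_ex)
  then show ?thesis unfolding partition_sign_def using assms by (intro blocks_sign_perm) auto
qed

lemma partition_sign_empty [simp]: "partition_sign {} = 1"
  using partition_sign_eq_blocks_sign[of "[]" "{}"] by (simp add: commuting_blocks_def)

lemma partition_sign_insert:
  assumes "finite p" "B \<notin> p" "commuting_blocks (insert B p)"
  shows "partition_sign (insert B p) = shuffle_sign B (\<Union>p) * partition_sign p"
proof -
  obtain Ps where Ps: "distinct Ps" "set Ps = p" using assms(1) finite_distinct_list by blast
  then have "partition_sign (insert B p) = blocks_sign (B # Ps)"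
    using assms by (intro partition_sign_eq_blocks_sign) auto
  also have "\<dots> = shuffle_sign B (\<Union>p) * partition_sign p"
    using Ps assms commuting_blocks_subset[OF assms(3)] by (simp add: partition_sign_eq_blocks_sign subset_insertI)
  finally show ?thesis .
qed

definition perfect_matchings :: "'a set \<Rightarrow> 'a set set set" where
  "perfect_matchings S = {p. partition_on S p \<and> (\<forall>B\<in>p. card B = 2)}"

definition le2_partitions :: "'a set \<Rightarrow> 'a set set set" where
  "le2_partitions S = {p. partition_on S p \<and> (\<forall>B\<in>p. card B \<le> 2) \<and> card {B \<in> p. odd (card B)} \<le> 1}"

lemma P0_le2_eq: "P0_le2 n = le2_partitions {1..n}"
  by (auto simp: P0_le2_def P0_def le2_partitions_def is_partition_def partition_on_def pairwise_def disjnt_def)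

lemma perfect_matchings_subset: "perfect_matchings S \<subseteq> le2_partitions S"
proof
  fix p assume "p \<in> perfect_matchings S"
  moreover from this have "{B \<in> p. odd (card B)} = {}" by (auto simp: perfect_matchings_def)
  then have "card {B \<in> p. odd (card B)} \<le> 1" by (simp only: card.empty)
  ultimately show "p \<in> le2_partitions S" by (simp add: perfect_matchings_def le2_partitions_def)
qed

lemma le2_partitions_commuting:
  assumes "finite S" "p \<in> le2_partitions S"
  shows "commuting_blocks p"
  unfolding commuting_blocks_def
proof (intro conjI ballI impI)
  have part: "partition_on S p" and odd: "card {B \<in> p. odd (card B)} \<le> 1"
    using assms(2) by (auto simp: le2_partitions_def)
  have "finite p" using assms(1) part by (rule finite_elements)
  show fin: "finite A" if "A \<in> p" for A
    using that part assms(1) by (auto simp: partition_on_def intro: finite_subset)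
  fix A B assume AB: "A \<in> p" "B \<in> p" "A \<noteq> B"
  then show disj: "A \<inter> B = {}" using part by (auto simp: partition_on_def pairwise_def disjnt_def)
  have "even (card A * card B)"
  proof (rule ccontr)
    assume "odd (card A * card B)"
    then have "{A, B} \<subseteq> {B \<in> p. odd (card B)}" using AB by auto
    then have "card {A, B} \<le> card {B \<in> p. odd (card B)}" using \<open>finite p\<close> by (intro card_mono) auto
    with AB odd show False by simp
  qed
  then show "shuffle_sign A B = shuffle_sign B A"
    using fin AB disj by (intro shuffle_sign_commute[symmetric]) auto
qed

lemma sum_image_insert:
  assumes "\<And>q. q \<in> Q \<Longrightarrow> B \<notin> q"
  shows "(\<Sum>p\<in>insert B ` Q. F p) = (\<Sum>q\<in>Q. F (insert B q))"
proof -
  have "inj_on (insert B) Q"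
  proof (rule inj_onI)
    fix q r assume "q \<in> Q" "r \<in> Q" "insert B q = insert B r"
    then have "insert B q - {B} = insert B r - {B}" "B \<notin> q" "B \<notin> r" using assms by auto
    then show "q = r" by simp
  qed
  then show ?thesis by (simp add: sum.reindex)
qed

lemma perfect_matchings_empty: "perfect_matchings {} = {{}}"
  by (auto simp: perfect_matchings_def partition_on_empty)

lemma perfect_matchings_insert_max:
  fixes x :: "'a::linorder"
  assumes "finite U" "\<forall>u\<in>U. u < x"
  shows "perfect_matchings (insert x U) = (\<Union>y\<in>U. insert {y, x} ` perfect_matchings (U - {y}))"
proof (intro equalityI subsetI)
  have x: "x \<notin> U" using assms(2) by auto
  fix p assume "p \<in> perfect_matchings (insert x U)"
  then have part: "partition_on (insert x U) p" and two: "\<forall>B\<in>p. card B = 2"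
    by (auto simp: perfect_matchings_def)
  then obtain B where B: "B \<in> p" "x \<in> B" by (auto simp: partition_on_def)
  from two B have "card B = 2" by simp
  then obtain u v where "B = {u, v}" "u \<noteq> v" by (auto simp: card_2_iff)
  with B(2) have "B = {if u = x then v else u, x}" "(if u = x then v else u) \<noteq> x" by auto
  then obtain y where y: "B = {y, x}" "y \<noteq> x" by blast
  from part B have "B \<subseteq> insert x U" by (auto simp: partition_on_def)
  with y x have "y \<in> U" "insert x U - B = U - {y}" by auto
  moreover have "partition_on (insert x U - B) (p - {B})"
    using part B by (metis Diff_iff insert_Diff partition_on_insert_block singletonI)
  ultimately show "p \<in> (\<Union>y\<in>U. insert {y, x} ` perfect_matchings (U - {y}))"
    using B y two by (auto simp: perfect_matchings_def intro!: bexI[of _ y] image_eqI[of _ _ "p - {B}"])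
next
  fix p assume "p \<in> (\<Union>y\<in>U. insert {y, x} ` perfect_matchings (U - {y}))"
  then obtain y q where y: "y \<in> U" and q: "q \<in> perfect_matchings (U - {y})" and p: "p = insert {y, x} q"
    by blast
  have "{y, x} \<notin> q" "insert x U - {y, x} = U - {y}" using q y assms(2)
    by (auto simp: perfect_matchings_def partition_on_def)
  then have "partition_on (insert x U) p"
    using q y by (simp add: p partition_on_insert_block perfect_matchings_def)
  moreover have "card {y, x} = 2" using y assms(2) by auto
  ultimately show "p \<in> perfect_matchings (insert x U)" using q p by (simp add: perfect_matchings_def)
qed

lemma finite_perfect_matchings: "finite S \<Longrightarrow> finite (perfect_matchings S)"
  by (auto simp: perfect_matchings_def intro: finite_subset[OF _ finitely_many_partition_on])

lemma perfect_matchings_even_card: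
  assumes "p \<in> perfect_matchings S"
  shows "even (card S)"
proof -
  have "partition_on S p" and two: "\<forall>B\<in>p. card B = 2"
    using assms by (auto simp: perfect_matchings_def)
  then have "card S = (\<Sum>B\<in>p. card B)" by (intro product_partition) (auto intro: card_ge_0_finite)
  also have "\<dots> = (\<Sum>B\<in>p. 2)" using two by simp
  finally show ?thesis by simp
qed

lemma sum_perfect_matchings_insert_max:
  fixes x :: "'a::linorder"
  assumes "finite U" "\<forall>u\<in>U. u < x"
  shows "(\<Sum>p\<in>perfect_matchings (insert x U). F p)
    = (\<Sum>y\<in>U. \<Sum>q\<in>perfect_matchings (U - {y}). F (insert {y, x} q))"
proof -
  have x: "x \<notin> U" using assms(2) by auto
  have notin: "{y, x} \<notin> q" if "q \<in> perfect_matchings (U - {y})" for y q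
    using that x by (auto simp: perfect_matchings_def partition_on_def)
  have "(\<Sum>p\<in>perfect_matchings (insert x U). F p)
      = (\<Sum>y\<in>U. \<Sum>p\<in>insert {y, x} ` perfect_matchings (U - {y}). F p)"
    unfolding perfect_matchings_insert_max[OF assms]
  proof (rule sum.UNION_disjoint)
    show "\<forall>y\<in>U. \<forall>z\<in>U. y \<noteq> z \<longrightarrow>
        insert {y, x} ` perfect_matchings (U - {y}) \<inter> insert {z, x} ` perfect_matchings (U - {z}) = {}"
    proof (intro ballI impI)
      fix y z assume "y \<in> U" "z \<in> U" "y \<noteq> z"
      have "{y, x} \<notin> insert {z, x} r" if "r \<in> perfect_matchings (U - {z})" for r
        using that x \<open>y \<noteq> z\<close> by (auto simp: perfect_matchings_def partition_on_def doubleton_eq_iff)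
      then show "insert {y, x} ` perfect_matchings (U - {y}) \<inter> insert {z, x} ` perfect_matchings (U - {z}) = {}"
        by blast
    qed
  qed (use assms in \<open>auto intro!: finite_imageI finite_perfect_matchings\<close>)
  also have "\<dots> = (\<Sum>y\<in>U. \<Sum>q\<in>perfect_matchings (U - {y}). F (insert {y, x} q))"
    by (simp add: sum_image_insert notin)
  finally show ?thesis .
qed

lemma partition_sign_insert_pair:
  assumes U: "finite U" "\<forall>u\<in>U. u < x" and y: "y \<in> U" and q: "q \<in> perfect_matchings (U - {y})"
  shows "partition_sign (insert {y, x} q) = shuffle_sign U {y} * partition_sign q"
proof -
  have "finite q" "\<Union>q = U - {y}" "{y, x} \<notin> q"
    using q U by (auto simp: perfect_matchings_def partition_on_def intro: finite_elements)
  moreover have "insert {y, x} q \<in> le2_partitions (insert x U)"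
    using perfect_matchings_subset perfect_matchings_insert_max[OF U] y q by blast
  then have "commuting_blocks (insert {y, x} q)"
    using U by (intro le2_partitions_commuting) auto
  ultimately show ?thesis by (simp add: partition_sign_insert shuffle_sign_pair_max[OF U y])
qed

lemma pfaffian_eq_sum_perfect_matchings:
  assumes "finite S"
  shows "pfaffian c S = (\<Sum>p\<in>perfect_matchings S. partition_sign p * (\<Prod>B\<in>p. c (Min B) (Max B)))"
  using assms
proof (induction rule: finite_insert_max_induct)
  case empty
  then show ?case by (simp add: perfect_matchings_empty)
next
  case (insert_max x U)
  let ?F = "\<lambda>p. partition_sign p * (\<Prod>B\<in>p. c (Min B) (Max B))"
  have "?F (insert {y, x} q) = shuffle_sign U {y} * c y x * ?F q"
    if "y \<in> U" "q \<in> perfect_matchings (U - {y})" for y q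
  proof -
    have "finite q" "{y, x} \<notin> q" "Min {y, x} = y" "Max {y, x} = x"
      using that insert_max.hyps by (auto simp: perfect_matchings_def partition_on_def intro: finite_elements)
    then show ?thesis using that by (simp add: partition_sign_insert_pair[OF insert_max.hyps])
  qed
  moreover have "pfaffian c (U - {y}) = (\<Sum>q\<in>perfect_matchings (U - {y}). ?F q)" if "y \<in> U" for y
    using that insert_max.hyps by (intro insert_max.IH) auto
  ultimately show ?case
    using insert_max.hyps by (simp add: sum_perfect_matchings_insert_max pfaffian_insert_max sum_distrib_left)
qed

lemma le2_partition_block_card:
  assumes "finite S" "p \<in> le2_partitions S" "B \<in> p"
  shows "card B = 1 \<or> card B = 2"
proof -
  have "B \<noteq> {}" "B \<subseteq> S" "card B \<le> 2" using assms(2,3) by (auto simp: le2_partitions_def partition_on_def)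
  then have "card B \<noteq> 0" using assms(1) by (auto dest: finite_subset)
  with \<open>card B \<le> 2\<close> show ?thesis by linarith
qed

lemma le2_partition_remove_singleton:
  assumes S: "finite S" and p: "p \<in> le2_partitions S" and a: "{a} \<in> p"
  shows "a \<in> S" "p - {{a}} \<in> perfect_matchings (S - {a})"
proof -
  have part: "partition_on S p" and odd: "card {B \<in> p. odd (card B)} \<le> 1"
    using p by (auto simp: le2_partitions_def)
  have "finite p" using S part by (rule finite_elements)
  have "card B = 2" if B: "B \<in> p - {{a}}" for B
  proof (rule ccontr)
    assume "card B \<noteq> 2"
    with le2_partition_block_card[OF S p] B have "card B = 1" by blast
    then have "{{a}, B} \<subseteq> {B \<in> p. odd (card B)}" using B a by auto
    then have "card {{a}, B} \<le> card {B \<in> p. odd (card B)}" using \<open>finite p\<close> by (intro card_mono) auto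
    moreover have "B \<noteq> {a}" using B by blast
    then have "card {{a}, B} = 2" by (metis card_2_iff)
    ultimately show False using odd by linarith
  qed
  moreover have "partition_on (S - {a}) (p - {{a}})" "a \<in> S"
    using part a partition_on_insert_block[of "{a}" "p - {{a}}" S] by (auto simp: insert_absorb)
  ultimately show "a \<in> S" "p - {{a}} \<in> perfect_matchings (S - {a})" by (simp_all add: perfect_matchings_def)
qed

lemma le2_partitions_split:
  assumes S: "finite S"
  shows "le2_partitions S = perfect_matchings S \<union> (\<Union>a\<in>S. insert {a} ` perfect_matchings (S - {a}))"
proof (intro equalityI subsetI)
  fix p assume p: "p \<in> le2_partitions S"
  show "p \<in> perfect_matchings S \<union> (\<Union>a\<in>S. insert {a} ` perfect_matchings (S - {a}))"
  proof (cases "\<exists>a. {a} \<in> p")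
    case False
    then have "\<forall>B\<in>p. card B = 2" using le2_partition_block_card[OF S p] by (metis card_1_singletonE)
    with p show ?thesis by (simp add: le2_partitions_def perfect_matchings_def)
  next
    case True
    then obtain a where a: "{a} \<in> p" by blast
    then have "p = insert {a} (p - {{a}})" by blast
    with le2_partition_remove_singleton[OF S p a] show ?thesis by blast
  qed
next
  fix p assume "p \<in> perfect_matchings S \<union> (\<Union>a\<in>S. insert {a} ` perfect_matchings (S - {a}))"
  then consider "p \<in> perfect_matchings S"
    | a q where "a \<in> S" "q \<in> perfect_matchings (S - {a})" "p = insert {a} q" by blast
  then show "p \<in> le2_partitions S"
  proof cases
    case 1
    then show ?thesis using perfect_matchings_subset by blast
  next
    case (2 a q)
    then have "{a} \<notin> q" "\<forall>B\<in>q. card B = 2" by (auto simp: perfect_matchings_def)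
    moreover from this have "{B \<in> p. odd (card B)} = {{a}}" using 2 by auto
    then have "card {B \<in> p. odd (card B)} \<le> 1" by (simp only:) simp
    moreover have "partition_on S p"
      using 2 \<open>{a} \<notin> q\<close> by (simp add: partition_on_insert_block perfect_matchings_def)
    ultimately show ?thesis using 2 by (simp add: le2_partitions_def)
  qed
qed

lemma sum_le2_partitions_split:
  assumes S: "finite S"
  shows "(\<Sum>p\<in>le2_partitions S. F p)
    = (\<Sum>p\<in>perfect_matchings S. F p) + (\<Sum>a\<in>S. \<Sum>q\<in>perfect_matchings (S - {a}). F (insert {a} q))"
proof -
  have notin: "{a} \<notin> q" if "q \<in> perfect_matchings T" for a q T
    using that by (auto simp: perfect_matchings_def)
  have eq: "a = b" if "insert {a} q = insert {b} r" "r \<in> perfect_matchings T" for a b q r T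
  proof -
    have "{a} \<in> insert {b} r" using that(1) by blast
    with notin[OF that(2)] show ?thesis by auto
  qed
  have "(\<Sum>p\<in>le2_partitions S. F p)
      = (\<Sum>p\<in>perfect_matchings S. F p) + (\<Sum>p\<in>(\<Union>a\<in>S. insert {a} ` perfect_matchings (S - {a})). F p)"
    unfolding le2_partitions_split[OF S]
    by (rule sum.union_disjoint) (use S finite_perfect_matchings in \<open>auto simp: perfect_matchings_def\<close>)
  also have "(\<Sum>p\<in>(\<Union>a\<in>S. insert {a} ` perfect_matchings (S - {a})). F p)
      = (\<Sum>a\<in>S. \<Sum>p\<in>insert {a} ` perfect_matchings (S - {a}). F p)"
  proof (rule sum.UNION_disjoint)
    show "\<forall>a\<in>S. \<forall>b\<in>S. a \<noteq> b \<longrightarrow>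
        insert {a} ` perfect_matchings (S - {a}) \<inter> insert {b} ` perfect_matchings (S - {b}) = {}"
    proof (intro ballI impI equals0I)
      fix a b p assume "a \<noteq> b"
        "p \<in> insert {a} ` perfect_matchings (S - {a}) \<inter> insert {b} ` perfect_matchings (S - {b})"
      then obtain q r where "insert {a} q = insert {b} r" "r \<in> perfect_matchings (S - {b})" by blast
      then have "a = b" by (rule eq)
      with \<open>a \<noteq> b\<close> show False ..
    qed
  qed (use S finite_perfect_matchings in auto)
  finally show ?thesis by (simp add: sum_image_insert notin)
qed

lemma partition_sign_insert_singleton:
  assumes S: "finite S" and a: "a \<in> S" and q: "q \<in> perfect_matchings (S - {a})"
  shows "partition_sign (insert {a} q) = shuffle_sign S {a} * partition_sign q"
proof -
  have "finite q" "\<Union>q = S - {a}" "{a} \<notin> q"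
    using q S by (auto simp: perfect_matchings_def partition_on_def intro: finite_elements)
  moreover have "insert {a} q \<in> le2_partitions S" using le2_partitions_split[OF S] a q by blast
  then have "commuting_blocks (insert {a} q)" by (rule le2_partitions_commuting[OF S])
  moreover have "shuffle_sign {a} (S - {a}) = shuffle_sign S {a}"
    using S perfect_matchings_even_card[OF q] by (subst shuffle_sign_commute[symmetric]) auto
  ultimately show ?thesis by (simp add: partition_sign_insert)
qed

lemma c_part_perfect_matching:
  "p \<in> perfect_matchings S \<Longrightarrow> c_part p lam = (\<Prod>B\<in>p. c2 (lam (Min B)) (lam (Max B)))"
  unfolding c_part_def by (rule prod.cong) (auto simp: perfect_matchings_def c_blk_def)

lemma sum_le2_partitions:
  assumes S: "finite S"
  shows "(\<Sum>p\<in>le2_partitions S. partition_sign p * c_part p lam)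
    = wedge (pfaffian (\<lambda>y x. c2 (lam y) (lam x))) (affine (\<lambda>a. c1 (lam a))) S"
proof -
  let ?W = "pfaffian (\<lambda>y x. c2 (lam y) (lam x))" and ?F = "\<lambda>p. partition_sign p * c_part p lam"
  have W: "(\<Sum>p\<in>perfect_matchings T. ?F p) = ?W T" if "finite T" for T
    using that by (simp add: pfaffian_eq_sum_perfect_matchings c_part_perfect_matching)
  have "?F (insert {a} q) = shuffle_sign S {a} * c1 (lam a) * ?F q"
    if "a \<in> S" "q \<in> perfect_matchings (S - {a})" for a q
  proof -
    have "finite q" "{a} \<notin> q" using that S by (auto simp: perfect_matchings_def intro: finite_elements)
    then show ?thesis
      using that by (simp add: partition_sign_insert_singleton[OF S] c_part_def c_blk_def algebra_simps)
  qed
  then have "(\<Sum>p\<in>le2_partitions S. ?F p)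
      = ?W S + (\<Sum>a\<in>S. shuffle_sign S {a} * c1 (lam a) * ?W (S - {a}))"
    using S by (simp add: sum_le2_partitions_split W[symmetric] sum_distrib_left)
  then show ?thesis using S by (simp add: wedge_affine_right)
qed

lemma eps_part_eq_partition_sign:
  assumes "p \<in> le2_partitions {1..n}"
  shows "eps_part n p = partition_sign p"
proof -
  have "finite p" using assms by (auto simp: le2_partitions_def intro: finite_elements)
  then have "\<exists>Ps. distinct Ps \<and> set Ps = p" by (metis finite_distinct_list)
  then have Ps: "distinct (SOME Ps. distinct Ps \<and> set Ps = p)" "set (SOME Ps. distinct Ps \<and> set Ps = p) = p"
    by (metis (mono_tags, lifting) someI_ex)+
  then have "ord_partition {1..n} (SOME Ps. distinct Ps \<and> set Ps = p)"
    using assms by (simp add: ord_partition_def le2_partitions_def)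
  then show ?thesis by (simp add: eps_part_def partition_sign_def eps_ord_eq_blocks_sign)
qed

theorem proposition7p4:
  fixes n :: nat and lam :: "nat \<Rightarrow> real"
  shows "(\<Sum>P\<in>P_ord n lam. (-1) ^ length P * eps_ord n P * eps' (set P))
       = (-1) ^ n * (\<Sum>p\<in>P0_le2 n. eps_part n p * c_part p lam)"
proof -
  have "(\<Sum>P\<in>P_ord n lam. (-1) ^ length P * eps_ord n P * eps' (set P)) = ord_partition_sum lam {1..n}"
    unfolding ord_partition_sum_def P_ord_eq
    by (intro sum.cong refl) (simp add: pos_ord_partitions_def eps_ord_eq_blocks_sign)
  also have "\<dots> = signed_c_sum lam {1..n}" by (simp add: ord_partition_sum_eq_signed_c_sum)
  also have "\<dots> = (-1) ^ n * wedge (pfaffian (\<lambda>y x. c2 (lam y) (lam x))) (affine (\<lambda>a. c1 (lam a))) {1..n}"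
    unfolding signed_c_sum_def by (subst wedge_affine_uminus) (auto intro: pfaffian_even_support)
  also have "\<dots> = (-1) ^ n * (\<Sum>p\<in>P0_le2 n. eps_part n p * c_part p lam)"
    by (simp add: P0_le2_eq sum_le2_partitions eps_part_eq_partition_sign)
  finally show ?thesis .
qed

end
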